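(* Let $p\colon X\to B$ be a Boolean set. Then the map $\alpha\colon X\to X^{\ast\ast}$, $a\mapsto L(a)=\{G\in X^{\ast}: a\in G\}$, together with $\overline{\alpha}\colon B\to B^{\ast\ast}$, $b\mapsto M(b)=\{F\in B^{\ast}: b\in F\}$, is an isomorphism of Boolean sets from $p\colon X\to B$ onto the Boolean set $X^{\ast\ast}\to B^{\ast\ast}$ of compact-open local sections of the dual étalé space $\widetilde p\colon X^{\ast}\to B^{\ast}$.
   Context: Convention: a "Boolean algebra" means a generalized Boolean algebra (relatively complemented distributive lattice with $0$). Boolean set: a presheaf of sets $p\colon X\to B$ over a Boolean algebra $B$ (pairwise disjoint $X_e$, restriction maps $x\mapsto x|^e_f$ for $e\ge f$, $|^e_e=\mathrm{id}$, $(x|^e_f)|^f_g=x|^e_g$) with all $X_e\ne\emptyset$, such that under the order $x\le y$ iff $p(x)\le p(y)$ and $x=y|^{p(y)}_{p(x)}$ there is a least element $0$, compatible pairs ($x\wedge y$ exists and $p(x\wedge y)=p(x)\wedge p(y)$) have joins, and $p(x)=0\Rightarrow x=0$. Morphism of Boolean sets: $\varphi$ with Boolean algebra morphism $\overline{\varphi}$, $q\varphi=\overline{\varphi}p$, $\varphi(x|^a_b)=\varphi(x)|^{\overline{\varphi}(a)}_{\overline{\varphi}(b)}$; isomorphism: invertible morphism. Dual étalé space: $X^{\ast}$ = ultrafilters of $(X,\le)$ (maximal proper non-empty down-directed upward-closed subsets) with basis $L(a)$; $B^{\ast}$ = ultrafilters of $B$ with basis $M(b)$; $\widetilde p(G)=p(G)$.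 For an étalé space $(E,r,Z)$ (surjective local homeomorphism, $Z$ Boolean space), its dual Boolean set is $E^{\ast}\to Z^{\ast}$ where $Z^{\ast}$ is the Boolean algebra of compact-open subsets of $Z$, $E^{\ast}$ the compact-open local sections (open sets on which $r$ is injective), $C\mapsto r(C)$, with restriction $C|^A_{A'}=C\cap r^{-1}(A')$. Here $X^{\ast\ast}$, $B^{\ast\ast}$ denote this construction applied to $\widetilde p\colon X^{\ast}\to B^{\ast}$. *)

theory Defs
  imports "HOL-Analysis.Analysis"
begin

definition is_least :: "'a set \<Rightarrow> ('a \<Rightarrow> 'a \<Rightarrow> bool) \<Rightarrow> 'a \<Rightarrow> bool" where
  "is_least A le z \<longleftrightarrow> z \<in> A \<and> (\<forall>x\<in>A. le z x)"

definition is_inf :: "'a set \<Rightarrow> ('a \<Rightarrow> 'a \<Rightarrow> bool) \<Rightarrow> 'a \<Rightarrow> 'a \<Rightarrow> 'a \<Rightarrow> bool" where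
  "is_inf A le a b m \<longleftrightarrow> m \<in> A \<and> le m a \<and> le m b \<and> (\<forall>c\<in>A. le c a \<and> le c b \<longrightarrow> le c m)"

definition is_sup :: "'a set \<Rightarrow> ('a \<Rightarrow> 'a \<Rightarrow> bool) \<Rightarrow> 'a \<Rightarrow> 'a \<Rightarrow> 'a \<Rightarrow> bool" where
  "is_sup A le a b s \<longleftrightarrow> s \<in> A \<and> le a s \<and> le b s \<and> (\<forall>c\<in>A. le a c \<and> le b c \<longrightarrow> le s c)"

definition partial_order_carrier :: "'a set \<Rightarrow> ('a \<Rightarrow> 'a \<Rightarrow> bool) \<Rightarrow> bool" where
  "partial_order_carrier A le \<longleftrightarrow>
     (\<forall>x\<in>A. le x x) \<and>
     (\<forall>x\<in>A. \<forall>y\<in>A. le x y \<and> le y x \<longrightarrow> x = y) \<and>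
     (\<forall>x\<in>A. \<forall>y\<in>A. \<forall>z\<in>A. le x y \<and> le y z \<longrightarrow> le x z)"

definition gen_boolean_algebra :: "'b set \<Rightarrow> ('b \<Rightarrow> 'b \<Rightarrow> bool) \<Rightarrow> bool" where
  "gen_boolean_algebra B le \<longleftrightarrow>
     partial_order_carrier B le \<and>
     (\<exists>z. is_least B le z) \<and>
     (\<forall>a\<in>B. \<forall>b\<in>B. (\<exists>m. is_inf B le a b m) \<and> (\<exists>s. is_sup B le a b s)) \<and>
     (\<forall>a\<in>B. \<forall>b\<in>B. \<forall>c\<in>B. \<forall>s m mb mc.
        is_sup B le b c s \<and> is_inf B le a s m \<and> is_inf B le a b mb \<and> is_inf B le a c mc
        \<longrightarrow> is_sup B le mb mc m) \<and>
     (\<forall>a\<in>B. \<forall>b\<in>B. \<forall>z. le a b \<and> is_least B le z \<longrightarrow>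
        (\<exists>c\<in>B. is_inf B le a c z \<and> is_sup B le a c b))"

definition ba_hom :: "'b set \<Rightarrow> ('b \<Rightarrow> 'b \<Rightarrow> bool) \<Rightarrow> 'c set \<Rightarrow> ('c \<Rightarrow> 'c \<Rightarrow> bool) \<Rightarrow> ('b \<Rightarrow> 'c) \<Rightarrow> bool" where
  "ba_hom B le C le' f \<longleftrightarrow>
     f ` B \<subseteq> C \<and>
     (\<forall>z. is_least B le z \<longrightarrow> is_least C le' (f z)) \<and>
     (\<forall>a\<in>B. \<forall>b\<in>B. \<forall>m. is_inf B le a b m \<longrightarrow> is_inf C le' (f a) (f b) (f m)) \<and>
     (\<forall>a\<in>B. \<forall>b\<in>B. \<forall>s. is_sup B le a b s \<longrightarrow> is_sup C le' (f a) (f b) (f s))"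

text \<open>A presheaf over the Boolean algebra (B, le) is given by the total set X, the projection
  p (so X_e = {x \<in> X. p x = e}, automatically pairwise disjoint) and restriction maps
  res e f x = x|^e_f, meaningful for f \<le> e and p x = e.\<close>

definition bs_le :: "'b set \<Rightarrow> ('b \<Rightarrow> 'b \<Rightarrow> bool) \<Rightarrow> ('x \<Rightarrow> 'b) \<Rightarrow> ('b \<Rightarrow> 'b \<Rightarrow> 'x \<Rightarrow> 'x) \<Rightarrow> 'x \<Rightarrow> 'x \<Rightarrow> bool" where
  "bs_le B le p res x y \<longleftrightarrow> le (p x) (p y) \<and> x = res (p y) (p x) y"

definition boolean_set :: "'x set \<Rightarrow> 'b set \<Rightarrow> ('b \<Rightarrow> 'b \<Rightarrow> bool) \<Rightarrow> ('x \<Rightarrow> 'b) \<Rightarrow> ('b \<Rightarrow> 'b \<Rightarrow> 'x \<Rightarrow> 'x) \<Rightarrow> bool" where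
  "boolean_set X B le p res \<longleftrightarrow>
     gen_boolean_algebra B le \<and>
     (\<forall>x\<in>X. p x \<in> B) \<and>
     (\<forall>e\<in>B. \<exists>x\<in>X. p x = e) \<and>
     (\<forall>x\<in>X. \<forall>f\<in>B. le f (p x) \<longrightarrow> res (p x) f x \<in> X \<and> p (res (p x) f x) = f) \<and>
     (\<forall>x\<in>X. res (p x) (p x) x = x) \<and>
     (\<forall>x\<in>X. \<forall>f\<in>B. \<forall>g\<in>B. le g f \<and> le f (p x) \<longrightarrow> res f g (res (p x) f x) = res (p x) g x) \<and>
     (\<exists>z. is_least X (bs_le B le p res) z \<and> (\<forall>x\<in>X. is_least B le (p x) \<longrightarrow> x = z)) \<and>
     (\<forall>x\<in>X. \<forall>y\<in>X. (\<exists>m. is_inf X (bs_le B le p res) x y m \<and> is_inf B le (p x) (p y) (p m))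
        \<longrightarrow> (\<exists>s. is_sup X (bs_le B le p res) x y s))"

definition bs_morphism ::
  "'x set \<Rightarrow> 'b set \<Rightarrow> ('b \<Rightarrow> 'b \<Rightarrow> bool) \<Rightarrow> ('x \<Rightarrow> 'b) \<Rightarrow> ('b \<Rightarrow> 'b \<Rightarrow> 'x \<Rightarrow> 'x) \<Rightarrow>
   'y set \<Rightarrow> 'c set \<Rightarrow> ('c \<Rightarrow> 'c \<Rightarrow> bool) \<Rightarrow> ('y \<Rightarrow> 'c) \<Rightarrow> ('c \<Rightarrow> 'c \<Rightarrow> 'y \<Rightarrow> 'y) \<Rightarrow>
   ('x \<Rightarrow> 'y) \<Rightarrow> ('b \<Rightarrow> 'c) \<Rightarrow> bool" where
  "bs_morphism X B le p res Y C le' q res' \<phi> \<phi>b \<longleftrightarrow>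
     \<phi> ` X \<subseteq> Y \<and> ba_hom B le C le' \<phi>b \<and>
     (\<forall>x\<in>X. q (\<phi> x) = \<phi>b (p x)) \<and>
     (\<forall>x\<in>X. \<forall>f\<in>B. le f (p x) \<longrightarrow> \<phi> (res (p x) f x) = res' (\<phi>b (p x)) (\<phi>b f) (\<phi> x))"

definition bs_iso ::
  "'x set \<Rightarrow> 'b set \<Rightarrow> ('b \<Rightarrow> 'b \<Rightarrow> bool) \<Rightarrow> ('x \<Rightarrow> 'b) \<Rightarrow> ('b \<Rightarrow> 'b \<Rightarrow> 'x \<Rightarrow> 'x) \<Rightarrow>
   'y set \<Rightarrow> 'c set \<Rightarrow> ('c \<Rightarrow> 'c \<Rightarrow> bool) \<Rightarrow> ('y \<Rightarrow> 'c) \<Rightarrow> ('c \<Rightarrow> 'c \<Rightarrow> 'y \<Rightarrow> 'y) \<Rightarrow>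
   ('x \<Rightarrow> 'y) \<Rightarrow> ('b \<Rightarrow> 'c) \<Rightarrow> bool" where
  "bs_iso X B le p res Y C le' q res' \<phi> \<phi>b \<longleftrightarrow>
     bs_morphism X B le p res Y C le' q res' \<phi> \<phi>b \<and>
     (\<exists>\<psi> \<psi>b. bs_morphism Y C le' q res' X B le p res \<psi> \<psi>b \<and>
        (\<forall>x\<in>X. \<psi> (\<phi> x) = x) \<and> (\<forall>y\<in>Y. \<phi> (\<psi> y) = y) \<and>
        (\<forall>b\<in>B. \<psi>b (\<phi>b b) = b) \<and> (\<forall>c\<in>C. \<phi>b (\<psi>b c) = c))"

definition proper_filter :: "'a set \<Rightarrow> ('a \<Rightarrow> 'a \<Rightarrow> bool) \<Rightarrow> 'a set \<Rightarrow> bool" where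
  "proper_filter A le F \<longleftrightarrow>
     F \<subseteq> A \<and> F \<noteq> {} \<and> F \<noteq> A \<and>
     (\<forall>x\<in>F. \<forall>y\<in>A. le x y \<longrightarrow> y \<in> F) \<and>
     (\<forall>x\<in>F. \<forall>y\<in>F. \<exists>z\<in>F. le z x \<and> le z y)"

definition ultrafilters :: "'a set \<Rightarrow> ('a \<Rightarrow> 'a \<Rightarrow> bool) \<Rightarrow> 'a set set" where
  "ultrafilters A le = {F. proper_filter A le F \<and> (\<forall>G. proper_filter A le G \<and> F \<subseteq> G \<longrightarrow> G = F)}"

definition dual_X :: "'x set \<Rightarrow> 'b set \<Rightarrow> ('b \<Rightarrow> 'b \<Rightarrow> bool) \<Rightarrow> ('x \<Rightarrow> 'b) \<Rightarrow> ('b \<Rightarrow> 'b \<Rightarrow> 'x \<Rightarrow> 'x) \<Rightarrow> 'x set set" where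
  "dual_X X B le p res = ultrafilters X (bs_le B le p res)"

definition L_set :: "'x set \<Rightarrow> 'b set \<Rightarrow> ('b \<Rightarrow> 'b \<Rightarrow> bool) \<Rightarrow> ('x \<Rightarrow> 'b) \<Rightarrow> ('b \<Rightarrow> 'b \<Rightarrow> 'x \<Rightarrow> 'x) \<Rightarrow> 'x \<Rightarrow> 'x set set" where
  "L_set X B le p res a = {G \<in> dual_X X B le p res. a \<in> G}"

definition M_set :: "'b set \<Rightarrow> ('b \<Rightarrow> 'b \<Rightarrow> bool) \<Rightarrow> 'b \<Rightarrow> 'b set set" where
  "M_set B le b = {F \<in> ultrafilters B le. b \<in> F}"

definition dual_X_top :: "'x set \<Rightarrow> 'b set \<Rightarrow> ('b \<Rightarrow> 'b \<Rightarrow> bool) \<Rightarrow> ('x \<Rightarrow> 'b) \<Rightarrow> ('b \<Rightarrow> 'b \<Rightarrow> 'x \<Rightarrow> 'x) \<Rightarrow> 'x set topology" where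
  "dual_X_top X B le p res = topology_generated_by (L_set X B le p res ` X)"

definition dual_B_top :: "'b set \<Rightarrow> ('b \<Rightarrow> 'b \<Rightarrow> bool) \<Rightarrow> 'b set topology" where
  "dual_B_top B le = topology_generated_by (M_set B le ` B)"

text \<open>The dual Boolean set of the \'etal\'e space (E, r, Z): compact-open local sections over
  compact-open subsets of Z, with C \<mapsto> r(C) and C|^A_A' = C \<inter> r^{-1}(A').\<close>

definition etale_sections :: "'e topology \<Rightarrow> ('e \<Rightarrow> 'z) \<Rightarrow> 'e set set" where
  "etale_sections TE r = {C. openin TE C \<and> compactin TE C \<and> inj_on r C}"

definition compact_opens :: "'z topology \<Rightarrow> 'z set set" where
  "compact_opens TZ = {A. openin TZ A \<and> compactin TZ A}"

definition etale_proj :: "('e \<Rightarrow> 'z) \<Rightarrow> 'e set \<Rightarrow> 'z set" where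
  "etale_proj r C = r ` C"

definition etale_res :: "'e topology \<Rightarrow> ('e \<Rightarrow> 'z) \<Rightarrow> 'z set \<Rightarrow> 'z set \<Rightarrow> 'e set \<Rightarrow> 'e set" where
  "etale_res TE r A A' C = C \<inter> {G \<in> topspace TE. r G \<in> A'}"

end

(*
  The base B is recovered from its Stone space: b \<mapsto> M(b) is an order isomorphism of B onto the
  compact-open subsets of the space of ultrafilters of B (maximal filters are prime, and a filter
  avoiding an ideal extends to an ultrafilter, which gives both separation and compactness).

  An ultrafilter G of X is determined by the ultrafilter p(G) of B together with any a \<in> G: it is
  the set of germs of a at p(G), i.e. of all x agreeing with a on some member of p(G). Hence
  G \<mapsto> p(G) maps L(a) bijectively onto M(p a), and L(a) is compact because M(p a) is. Elements with
  the same germs everywhere agree on a finite cover of their support and, gluing compatible pieces,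
  on all of it; so a \<mapsto> L(a) is injective. Conversely a compact-open local section is a finite
  union of basic sets L(a_i); injectivity of the projection on it makes the a_i pairwise compatible,
  so they glue to a single a. Thus L and M are bijections preserving order, projection and
  restriction, and such a pair of bijections transports the Boolean-set structure and is an
  isomorphism.
*)

theory Submission
  imports Defs
begin

lemma generated_topology_local_base:
  assumes base: "\<forall>s1\<in>S. \<forall>s2\<in>S. \<forall>x\<in>s1 \<inter> s2. \<exists>s3\<in>S. x \<in> s3 \<and> s3 \<subseteq> s1 \<inter> s2"
    and U: "openin (topology_generated_by S) U"
  shows "\<forall>x\<in>U. \<exists>s\<in>S. x \<in> s \<and> s \<subseteq> U"
proof -
  have "generate_topology_on S U" using U by (rule openin_topology_generated_by)
  then show ?thesis
  proof (induction rule: generate_topology_on.induct)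
    case Empty
    then show ?case by simp
  next
    case (Int a b)
    show ?case
    proof
      fix x assume "x \<in> a \<inter> b"
      then obtain s1 s2 where "s1 \<in> S" "x \<in> s1" "s1 \<subseteq> a" "s2 \<in> S" "x \<in> s2" "s2 \<subseteq> b"
        using Int.IH by blast
      then obtain s3 where "s3 \<in> S" "x \<in> s3" "s3 \<subseteq> s1 \<inter> s2" using base[rule_format, of s1 s2 x] by blast
      then show "\<exists>s\<in>S. x \<in> s \<and> s \<subseteq> a \<inter> b" using \<open>s1 \<subseteq> a\<close> \<open>s2 \<subseteq> b\<close> by blast
    qed
  next
    case (UN K)
    show ?case
    proof
      fix x assume "x \<in> \<Union>K"
      then obtain k where "k \<in> K" "x \<in> k" by blast
      then obtain s where "s \<in> S" "x \<in> s" "s \<subseteq> k" using UN.IH by blast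
      then show "\<exists>s\<in>S. x \<in> s \<and> s \<subseteq> \<Union>K" using \<open>k \<in> K\<close> by blast
    qed
  next
    case (Basis s)
    then show ?case by blast
  qed
qed

lemma compactin_generated_topology:
  assumes base: "\<forall>s1\<in>S. \<forall>s2\<in>S. \<forall>x\<in>s1 \<inter> s2. \<exists>s3\<in>S. x \<in> s3 \<and> s3 \<subseteq> s1 \<inter> s2"
    and KS: "K \<subseteq> \<Union>S"
    and basic_subcover: "\<And>S'. S' \<subseteq> S \<Longrightarrow> K \<subseteq> \<Union>S' \<Longrightarrow> \<exists>T. T \<subseteq> S' \<and> finite T \<and> K \<subseteq> \<Union>T"
  shows "compactin (topology_generated_by S) K"
  unfolding compactin_def
proof (intro conjI allI impI)
  show "K \<subseteq> topspace (topology_generated_by S)" using KS by simp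
  fix \<U> assume cover: "(\<forall>U\<in>\<U>. openin (topology_generated_by S) U) \<and> K \<subseteq> \<Union>\<U>"
  define S' where "S' = {s\<in>S. \<exists>U\<in>\<U>. s \<subseteq> U}"
  have "K \<subseteq> \<Union>S'"
  proof
    fix x assume "x \<in> K"
    then obtain U where "U \<in> \<U>" "x \<in> U" using cover by blast
    moreover have "openin (topology_generated_by S) U" using cover \<open>U \<in> \<U>\<close> by blast
    ultimately obtain s where "s \<in> S" "x \<in> s" "s \<subseteq> U" using generated_topology_local_base[OF base, of U] by blast
    then show "x \<in> \<Union>S'" unfolding S'_def using \<open>U \<in> \<U>\<close> by blast
  qed
  moreover have "S' \<subseteq> S" unfolding S'_def by blast
  ultimately obtain T where T: "T \<subseteq> S'" "finite T" "K \<subseteq> \<Union>T" using basic_subcover[of S'] by blast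
  have "\<forall>s\<in>T. \<exists>U. U \<in> \<U> \<and> s \<subseteq> U" using T(1) unfolding S'_def by blast
  then have "\<exists>f. \<forall>s\<in>T. f s \<in> \<U> \<and> s \<subseteq> f s" by (rule bchoice)
  then obtain f where f: "\<forall>s\<in>T. f s \<in> \<U> \<and> s \<subseteq> f s" by blast
  show "\<exists>\<F>. finite \<F> \<and> \<F> \<subseteq> \<U> \<and> K \<subseteq> \<Union>\<F>"
  proof (intro exI conjI)
    show "finite (f ` T)" using T by simp
    show "f ` T \<subseteq> \<U>" using f by blast
    show "K \<subseteq> \<Union>(f ` T)" using T(3) f by blast
  qed
qed

locale gen_ba =
  fixes B :: "'b set" and le :: "'b \<Rightarrow> 'b \<Rightarrow> bool"
  assumes gen_boolean_algebra: "gen_boolean_algebra B le"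
begin

lemma partial_order: "partial_order_carrier B le"
  and ex_least: "\<exists>z. is_least B le z"
  and ex_inf_sup: "\<forall>a\<in>B. \<forall>b\<in>B. (\<exists>m. is_inf B le a b m) \<and> (\<exists>s. is_sup B le a b s)"
  and distrib_axiom: "\<forall>a\<in>B. \<forall>b\<in>B. \<forall>c\<in>B. \<forall>s m mb mc.
        is_sup B le b c s \<and> is_inf B le a s m \<and> is_inf B le a b mb \<and> is_inf B le a c mc
        \<longrightarrow> is_sup B le mb mc m"
  and relative_complement: "\<forall>a\<in>B. \<forall>b\<in>B. \<forall>z. le a b \<and> is_least B le z \<longrightarrow>
        (\<exists>c\<in>B. is_inf B le a c z \<and> is_sup B le a c b)"
  using gen_boolean_algebra unfolding gen_boolean_algebra_def by blast+

lemma refl: "a \<in> B \<Longrightarrow> le a a"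
  and antisym: "a \<in> B \<Longrightarrow> b \<in> B \<Longrightarrow> le a b \<Longrightarrow> le b a \<Longrightarrow> a = b"
  and trans: "a \<in> B \<Longrightarrow> b \<in> B \<Longrightarrow> c \<in> B \<Longrightarrow> le a b \<Longrightarrow> le b c \<Longrightarrow> le a c"
  using partial_order unfolding partial_order_carrier_def by blast+

definition zero where "zero = (SOME z. is_least B le z)"
definition meet where "meet a b = (SOME m. is_inf B le a b m)"
definition join where "join a b = (SOME s. is_sup B le a b s)"

lemma is_least_zero: "is_least B le zero"
  unfolding zero_def by (rule someI_ex) (rule ex_least)

lemma zero_in [simp]: "zero \<in> B" and zero_le: "a \<in> B \<Longrightarrow> le zero a"
  using is_least_zero unfolding is_least_def by blast+

lemma le_zero_iff: "a \<in> B \<Longrightarrow> le a zero \<longleftrightarrow> a = zero"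
  using zero_le antisym refl by auto

lemma is_inf_meet: "a \<in> B \<Longrightarrow> b \<in> B \<Longrightarrow> is_inf B le a b (meet a b)"
  unfolding meet_def by (rule someI_ex) (use ex_inf_sup in blast)

lemma is_sup_join: "a \<in> B \<Longrightarrow> b \<in> B \<Longrightarrow> is_sup B le a b (join a b)"
  unfolding join_def by (rule someI_ex) (use ex_inf_sup in blast)

lemma is_inf_unique: "is_inf B le a b m \<Longrightarrow> is_inf B le a b m' \<Longrightarrow> m = m'"
  unfolding is_inf_def by (meson antisym)

lemma is_sup_unique: "is_sup B le a b s \<Longrightarrow> is_sup B le a b s' \<Longrightarrow> s = s'"
  unfolding is_sup_def by (meson antisym)

lemma is_inf_iff: "a \<in> B \<Longrightarrow> b \<in> B \<Longrightarrow> is_inf B le a b m \<longleftrightarrow> m = meet a b"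
  using is_inf_meet is_inf_unique by blast

lemma is_sup_iff: "a \<in> B \<Longrightarrow> b \<in> B \<Longrightarrow> is_sup B le a b s \<longleftrightarrow> s = join a b"
  using is_sup_join is_sup_unique by blast

lemma meet_in [simp]: "a \<in> B \<Longrightarrow> b \<in> B \<Longrightarrow> meet a b \<in> B"
  and meet_le1: "a \<in> B \<Longrightarrow> b \<in> B \<Longrightarrow> le (meet a b) a"
  and meet_le2: "a \<in> B \<Longrightarrow> b \<in> B \<Longrightarrow> le (meet a b) b"
  and meet_greatest: "a \<in> B \<Longrightarrow> b \<in> B \<Longrightarrow> c \<in> B \<Longrightarrow> le c a \<Longrightarrow> le c b \<Longrightarrow> le c (meet a b)"
  using is_inf_meet[of a b] unfolding is_inf_def by blast+

lemma join_in [simp]: "a \<in> B \<Longrightarrow> b \<in> B \<Longrightarrow> join a b \<in> B"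
  and join_ge1: "a \<in> B \<Longrightarrow> b \<in> B \<Longrightarrow> le a (join a b)"
  and join_ge2: "a \<in> B \<Longrightarrow> b \<in> B \<Longrightarrow> le b (join a b)"
  and join_least: "a \<in> B \<Longrightarrow> b \<in> B \<Longrightarrow> c \<in> B \<Longrightarrow> le a c \<Longrightarrow> le b c \<Longrightarrow> le (join a b) c"
  using is_sup_join[of a b] unfolding is_sup_def by blast+

lemma meet_absorb: "a \<in> B \<Longrightarrow> b \<in> B \<Longrightarrow> le a b \<Longrightarrow> meet a b = a"
  using antisym[OF meet_in[of a b] _ meet_le1[of a b] meet_greatest[of a b a]] refl[of a] by blast

lemma join_absorb: "a \<in> B \<Longrightarrow> b \<in> B \<Longrightarrow> le a b \<Longrightarrow> join a b = b"
  using antisym[OF join_in[of a b] _ join_least[of a b b] join_ge2[of a b]] refl[of b] by blast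

lemma meet_commute: "a \<in> B \<Longrightarrow> b \<in> B \<Longrightarrow> meet a b = meet b a"
  using antisym[OF meet_in[of a b] meet_in[of b a] meet_greatest[of b a "meet a b"] meet_greatest[of a b "meet b a"]]
    meet_le1 meet_le2 by simp

lemma join_commute: "a \<in> B \<Longrightarrow> b \<in> B \<Longrightarrow> join a b = join b a"
  using antisym[OF join_in[of a b] join_in[of b a] join_least[of a b "join b a"] join_least[of b a "join a b"]]
    join_ge1 join_ge2 by simp

lemma join_zero_left: "a \<in> B \<Longrightarrow> join zero a = a"
  and join_zero_right: "a \<in> B \<Longrightarrow> join a zero = a"
  using join_absorb[of zero a] join_commute[of a zero] zero_le[of a] by simp_all

lemma meet_mono:
  assumes "a \<in> B" "b \<in> B" "a' \<in> B" "b' \<in> B" "le a a'" "le b b'"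
  shows "le (meet a b) (meet a' b')"
proof (rule meet_greatest)
  show "le (meet a b) a'" using assms trans[of "meet a b" a a'] meet_le1 by simp
  show "le (meet a b) b'" using assms trans[of "meet a b" b b'] meet_le2 by simp
qed (use assms in auto)

lemma meet_join_distrib:
  assumes "a \<in> B" "b \<in> B" "c \<in> B"
  shows "meet a (join b c) = join (meet a b) (meet a c)"
proof -
  have "is_sup B le (meet a b) (meet a c) (meet a (join b c))"
    using distrib_axiom assms is_sup_join[of b c] is_inf_meet[of a "join b c"]
      is_inf_meet[of a b] is_inf_meet[of a c] join_in[of b c] by blast
  then show ?thesis using assms is_sup_iff by auto
qed

definition diff where
  "diff a b = (SOME d. d \<in> B \<and> is_inf B le (meet a b) d zero \<and> is_sup B le (meet a b) d a)"

lemma diff_in [simp]: "a \<in> B \<Longrightarrow> b \<in> B \<Longrightarrow> diff a b \<in> B"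
  and meet_diff: "a \<in> B \<Longrightarrow> b \<in> B \<Longrightarrow> meet (meet a b) (diff a b) = zero"
  and join_diff: "a \<in> B \<Longrightarrow> b \<in> B \<Longrightarrow> join (meet a b) (diff a b) = a"
proof -
  assume ab: "a \<in> B" "b \<in> B"
  have "\<exists>d. d \<in> B \<and> is_inf B le (meet a b) d zero \<and> is_sup B le (meet a b) d a"
    using relative_complement is_least_zero ab meet_in[OF ab] meet_le1[OF ab] by blast
  then have "diff a b \<in> B \<and> is_inf B le (meet a b) (diff a b) zero \<and> is_sup B le (meet a b) (diff a b) a"
    unfolding diff_def by (rule someI_ex)
  with ab show "diff a b \<in> B" "meet (meet a b) (diff a b) = zero" "join (meet a b) (diff a b) = a"
    using is_inf_iff is_sup_iff by auto
qed

lemma diff_le: "a \<in> B \<Longrightarrow> b \<in> B \<Longrightarrow> le (diff a b) a"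
  using join_diff[of a b] join_ge2[of "meet a b" "diff a b"] by simp

lemma diff_meet: assumes "a \<in> B" "b \<in> B" shows "meet (diff a b) b = zero"
proof -
  have "le (meet (diff a b) b) (meet (meet a b) (diff a b))"
  proof (rule meet_greatest)
    show "le (meet (diff a b) b) (meet a b)"
      using meet_mono[of "diff a b" b a b] assms diff_le refl by simp
  qed (use assms meet_le1 in auto)
  then show ?thesis using assms meet_diff le_zero_iff by simp
qed

lemma le_diff:
  assumes "a \<in> B" "b \<in> B" "x \<in> B" "le x a" "meet x b = zero"
  shows "le x (diff a b)"
proof -
  have "meet x (meet a b) = zero"
    using assms meet_mono[of x "meet a b" x b] refl meet_le2 le_zero_iff by simp
  moreover have "x = join (meet x (meet a b)) (meet x (diff a b))"
    using assms meet_absorb meet_join_distrib[of x "meet a b" "diff a b"] join_diff by simp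
  ultimately have "x = meet x (diff a b)" using assms join_zero_left by simp
  then show ?thesis using assms meet_le2[of x "diff a b"] by simp
qed

lemma diff_eq_zero_imp_le: assumes "a \<in> B" "b \<in> B" "diff a b = zero" shows "le a b"
proof -
  have "a = meet a b" using join_diff[OF assms(1,2)] assms(3) join_zero_right assms by simp
  then show ?thesis using assms meet_le2[of a b] by simp
qed

lemma diff_antimono:
  assumes "b \<in> B" "y \<in> B" "y' \<in> B" "le y y'" shows "le (diff b y') (diff b y)"
proof (rule le_diff)
  have "le (meet (diff b y') y) (meet (diff b y') y')"
    using meet_mono[of "diff b y'" y "diff b y'" y'] assms refl by simp
  then show "meet (diff b y') y = zero" using diff_meet assms le_zero_iff by simp
qed (use assms diff_le in auto)

end

section \<open>Ultrafilters of a generalized Boolean algebra and its dual space\<close>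

context gen_ba
begin

abbreviation PF where "PF \<equiv> proper_filter B le"
abbreviation UF where "UF \<equiv> ultrafilters B le"
abbreviation M where "M \<equiv> M_set B le"

lemma proper_filter_subset: "PF F \<Longrightarrow> F \<subseteq> B"
  and proper_filter_nonempty: "PF F \<Longrightarrow> F \<noteq> {}"
  and proper_filter_upward: "PF F \<Longrightarrow> x \<in> F \<Longrightarrow> y \<in> B \<Longrightarrow> le x y \<Longrightarrow> y \<in> F"
  and proper_filter_directed: "PF F \<Longrightarrow> x \<in> F \<Longrightarrow> y \<in> F \<Longrightarrow> \<exists>z\<in>F. le z x \<and> le z y"
  unfolding proper_filter_def by blast+

lemma proper_filter_zero: assumes "PF F" shows "zero \<notin> F"
proof
  assume "zero \<in> F"
  then have "B \<subseteq> F" using proper_filter_upward[OF assms] zero_le by blast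
  then show False using assms unfolding proper_filter_def by blast
qed

lemma proper_filter_meet: assumes "PF F" "x \<in> F" "y \<in> F" shows "meet x y \<in> F"
proof -
  obtain z where "z \<in> F" "le z x" "le z y" using proper_filter_directed[OF assms] by blast
  moreover have "x \<in> B" "y \<in> B" "z \<in> B" using assms proper_filter_subset \<open>z \<in> F\<close> by auto
  ultimately show ?thesis using proper_filter_upward[OF assms(1), of z "meet x y"] meet_greatest by simp
qed

lemma proper_filterI:
  assumes "F \<subseteq> B" "F \<noteq> {}" "zero \<notin> F" "\<And>x y. x \<in> F \<Longrightarrow> y \<in> B \<Longrightarrow> le x y \<Longrightarrow> y \<in> F"
    "\<And>x y. x \<in> F \<Longrightarrow> y \<in> F \<Longrightarrow> \<exists>z\<in>F. le z x \<and> le z y"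
  shows "PF F"
  unfolding proper_filter_def using assms zero_in by blast

lemma ultrafilter_proper: "F \<in> UF \<Longrightarrow> PF F"
  and ultrafilter_maximal: "F \<in> UF \<Longrightarrow> PF G \<Longrightarrow> F \<subseteq> G \<Longrightarrow> G = F"
  unfolding ultrafilters_def by blast+

lemma ultrafilter_subset: "F \<in> UF \<Longrightarrow> F \<subseteq> B"
  using ultrafilter_proper proper_filter_subset by blast

lemma proper_filter_Union_chain:
  assumes "C \<noteq> {}" "C \<subseteq> Collect PF" "subset.chain (Collect PF) C"
  shows "PF (\<Union>C)"
proof (rule proper_filterI)
  show "\<Union>C \<subseteq> B" "\<Union>C \<noteq> {}" "zero \<notin> \<Union>C"
    using assms proper_filter_subset proper_filter_nonempty proper_filter_zero by blast+
  show "y \<in> \<Union>C" if "x \<in> \<Union>C" "y \<in> B" "le x y" for x y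
    using that assms proper_filter_upward by blast
  show "\<exists>z\<in>\<Union>C. le z x \<and> le z y" if xy: "x \<in> \<Union>C" "y \<in> \<Union>C" for x y
  proof -
    obtain X Y where XY: "X \<in> C" "Y \<in> C" "x \<in> X" "y \<in> Y" using xy by blast
    then have "X \<subseteq> Y \<or> Y \<subseteq> X" using assms(3) unfolding subset.chain_def by blast
    then obtain Z where "Z \<in> C" "x \<in> Z" "y \<in> Z" using XY by blast
    then show ?thesis using proper_filter_directed[of Z x y] assms(2) by blast
  qed
qed

lemma ultrafilter_extension: assumes "PF \<Phi>" shows "\<exists>F\<in>UF. \<Phi> \<subseteq> F"
proof -
  define A where "A = {G. PF G \<and> \<Phi> \<subseteq> G}"
  have "\<exists>U\<in>A. \<forall>X\<in>C. X \<subseteq> U" if "subset.chain A C" for C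
  proof (cases "C = {}")
    case True
    then show ?thesis using assms unfolding A_def by blast
  next
    case False
    have "C \<subseteq> Collect PF" "subset.chain (Collect PF) C"
      using that unfolding A_def subset.chain_def by auto
    then have "PF (\<Union>C)" using proper_filter_Union_chain False by blast
    moreover have "\<Phi> \<subseteq> \<Union>C" using False that unfolding A_def subset.chain_def by blast
    ultimately show ?thesis unfolding A_def by blast
  qed
  then obtain F where F: "F \<in> A" "\<forall>X\<in>A. F \<subseteq> X \<longrightarrow> X = F"
    using subset_Zorn[of A] by blast
  then have "F \<in> UF" unfolding ultrafilters_def A_def by blast
  then show ?thesis using F unfolding A_def by blast
qed

lemma proper_filter_adjoin:
  assumes F: "PF F" and a: "a \<in> B" and meets: "\<And>f. f \<in> F \<Longrightarrow> meet f a \<noteq> zero"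
  shows "PF {x\<in>B. \<exists>f\<in>F. le (meet f a) x}" (is "PF ?G")
proof (rule proper_filterI)
  have FB: "F \<subseteq> B" using proper_filter_subset[OF F] .
  show "?G \<subseteq> B" by blast
  obtain f where "f \<in> F" using proper_filter_nonempty[OF F] by blast
  then show "?G \<noteq> {}" using a FB meet_le2 by blast
  show "zero \<notin> ?G" using meets FB a le_zero_iff by (auto dest: meets)
  show "y \<in> ?G" if xy: "x \<in> ?G" "y \<in> B" "le x y" for x y
  proof -
    obtain f where f: "f \<in> F" "le (meet f a) x" "x \<in> B" using xy by blast
    then have "le (meet f a) y" using xy FB a trans[of "meet f a" x y] by auto
    then show ?thesis using f xy by blast
  qed
  show "\<exists>z\<in>?G. le z x \<and> le z y" if xy: "x \<in> ?G" "y \<in> ?G" for x y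
  proof -
    obtain f g where fg: "f \<in> F" "g \<in> F" "le (meet f a) x" "le (meet g a) y" "x \<in> B" "y \<in> B"
      using xy by blast
    define h where "h = meet f g"
    have h: "h \<in> F" "h \<in> B" "f \<in> B" "g \<in> B"
      using proper_filter_meet[OF F] fg FB unfolding h_def by auto
    have "le h f" "le h g" unfolding h_def using h(3,4) by (simp_all add: meet_le1 meet_le2)
    then have "le (meet h a) (meet f a)" "le (meet h a) (meet g a)"
      using meet_mono[of h a f a] meet_mono[of h a g a] h a refl by simp_all
    then have "le (meet h a) x" "le (meet h a) y"
      using trans[of "meet h a" "meet f a" x] trans[of "meet h a" "meet g a" y] h a fg by simp_all
    moreover have "meet h a \<in> ?G" using h a refl[of "meet h a"] by auto
    ultimately show ?thesis by blast
  qed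
qed

lemma ultrafilter_disjoint:
  assumes F: "F \<in> UF" and a: "a \<in> B" "a \<notin> F" shows "\<exists>f\<in>F. meet f a = zero"
proof (rule ccontr)
  assume "\<not> (\<exists>f\<in>F. meet f a = zero)"
  then have "PF {x\<in>B. \<exists>f\<in>F. le (meet f a) x}"
    using proper_filter_adjoin[OF ultrafilter_proper[OF F] a(1)] by blast
  moreover have FB: "F \<subseteq> B" using ultrafilter_subset[OF F] .
  then have "F \<subseteq> {x\<in>B. \<exists>f\<in>F. le (meet f a) x}" using a meet_le1 by blast
  ultimately have "{x\<in>B. \<exists>f\<in>F. le (meet f a) x} = F" using ultrafilter_maximal[OF F] by blast
  moreover have "a \<in> {x\<in>B. \<exists>f\<in>F. le (meet f a) x}"
    using a FB meet_le2 proper_filter_nonempty[OF ultrafilter_proper[OF F]] by blast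
  ultimately show False using a by blast
qed

lemma ultrafilter_prime:
  assumes F: "F \<in> UF" and ab: "a \<in> B" "b \<in> B" "join a b \<in> F"
  shows "a \<in> F \<or> b \<in> F"
proof (rule ccontr)
  assume "\<not> (a \<in> F \<or> b \<in> F)"
  then obtain f g where fg: "f \<in> F" "meet f a = zero" "g \<in> F" "meet g b = zero"
    using ultrafilter_disjoint[OF F ab(1)] ultrafilter_disjoint[OF F ab(2)] by blast
  have PF: "PF F" using ultrafilter_proper[OF F] .
  have B: "f \<in> B" "g \<in> B" using fg ultrafilter_subset[OF F] by auto
  define h where "h = meet f g"
  have h: "h \<in> F" "h \<in> B" using proper_filter_meet[OF PF] fg B unfolding h_def by auto
  have "le h f" "le h g" unfolding h_def using B by (simp_all add: meet_le1 meet_le2)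
  then have "le (meet h a) (meet f a)" "le (meet h b) (meet g b)"
    using meet_mono[of h a f a] meet_mono[of h b g b] B h ab refl by simp_all
  then have "meet h a = zero" "meet h b = zero" using fg le_zero_iff h ab by simp_all
  moreover have "meet h (join a b) \<in> F" using proper_filter_meet[OF PF] h ab by blast
  ultimately have "zero \<in> F" using meet_join_distrib h ab join_zero_left by simp
  then show False using proper_filter_zero[OF PF] by blast
qed

lemma M_meet: assumes "a \<in> B" "b \<in> B" shows "M (meet a b) = M a \<inter> M b"
proof -
  have "meet a b \<in> F \<longleftrightarrow> a \<in> F \<and> b \<in> F" if "F \<in> UF" for F
  proof -
    have P: "PF F" using ultrafilter_proper[OF that] .
    show ?thesis
      using proper_filter_upward[OF P _ assms(1) meet_le1[OF assms]]
        proper_filter_upward[OF P _ assms(2) meet_le2[OF assms]] proper_filter_meet[OF P] by blast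
  qed
  then show ?thesis unfolding M_set_def by blast
qed

lemma M_join: assumes "a \<in> B" "b \<in> B" shows "M (join a b) = M a \<union> M b"
proof -
  have "join a b \<in> F \<longleftrightarrow> a \<in> F \<or> b \<in> F" if "F \<in> UF" for F
  proof -
    have P: "PF F" using ultrafilter_proper[OF that] .
    show ?thesis
      using proper_filter_upward[OF P _ join_in[OF assms] join_ge1[OF assms]]
        proper_filter_upward[OF P _ join_in[OF assms] join_ge2[OF assms]]
        ultrafilter_prime[OF that assms] by blast
  qed
  then show ?thesis unfolding M_set_def by blast
qed

lemma M_zero: "M zero = {}"
  unfolding M_set_def using ultrafilter_proper proper_filter_zero by blast

lemma M_mono: assumes "a \<in> B" "b \<in> B" "le a b" shows "M a \<subseteq> M b"
  unfolding M_set_def using proper_filter_upward[OF ultrafilter_proper _ assms(2,3)] by blast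

lemma proper_filter_principal:
  assumes "d \<in> B" "d \<noteq> zero" shows "PF {x\<in>B. le d x}"
proof (rule proper_filterI)
  show "{x\<in>B. le d x} \<noteq> {}" "zero \<notin> {x\<in>B. le d x}" using assms refl le_zero_iff by auto
  show "y \<in> {x\<in>B. le d x}" if "x \<in> {x\<in>B. le d x}" "y \<in> B" "le x y" for x y
    using that assms trans[of d x y] by blast
  show "\<exists>z\<in>{x\<in>B. le d x}. le z x \<and> le z y" if "x \<in> {x\<in>B. le d x}" "y \<in> {x\<in>B. le d x}" for x y
    using that assms refl by blast
qed blast

lemma ultrafilter_separation:
  assumes ab: "a \<in> B" "b \<in> B" "\<not> le a b" shows "\<exists>F\<in>UF. a \<in> F \<and> b \<notin> F"
proof -
  define d where "d = diff a b"
  have d: "d \<in> B" "le d a" "meet d b = zero" "d \<noteq> zero"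
    using ab diff_le diff_meet diff_eq_zero_imp_le unfolding d_def by auto
  obtain F where F: "F \<in> UF" "{x\<in>B. le d x} \<subseteq> F"
    using ultrafilter_extension[OF proper_filter_principal[OF d(1,4)]] by blast
  then have dF: "d \<in> F" using d refl by blast
  have "a \<in> F" using proper_filter_upward[OF ultrafilter_proper[OF F(1)] dF] ab d by blast
  moreover have "b \<notin> F"
  proof
    assume "b \<in> F"
    then have "meet d b \<in> F" using proper_filter_meet[OF ultrafilter_proper[OF F(1)] dF] by blast
    then show False using d proper_filter_zero[OF ultrafilter_proper[OF F(1)]] by simp
  qed
  ultimately show ?thesis using F by blast
qed

lemma M_subset_iff: assumes "a \<in> B" "b \<in> B" shows "M a \<subseteq> M b \<longleftrightarrow> le a b"
proof
  show "M a \<subseteq> M b \<Longrightarrow> le a b" using ultrafilter_separation[OF assms] unfolding M_set_def by blast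
qed (rule M_mono[OF assms])

lemma M_inj: "a \<in> B \<Longrightarrow> b \<in> B \<Longrightarrow> M a = M b \<Longrightarrow> a = b"
  using M_subset_iff[of a b] M_subset_iff[of b a] antisym by simp

lemma M_Union_finite:
  assumes S: "S \<subseteq> B" "zero \<in> S" "\<And>x y. x \<in> S \<Longrightarrow> y \<in> S \<Longrightarrow> join x y \<in> S"
  shows "finite T \<Longrightarrow> T \<subseteq> S \<Longrightarrow> \<exists>y\<in>S. \<Union>(M ` T) = M y"
proof (induction T rule: finite_induct)
  case empty
  then show ?case using S M_zero by (intro bexI[of _ zero]) auto
next
  case (insert c T)
  then obtain y where "y \<in> S" "\<Union>(M ` T) = M y" by blast
  moreover have "c \<in> S" using insert by blast
  ultimately show ?case using S M_join[of c y] by (intro bexI[of _ "join c y"]) auto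
qed

text \<open>The prime ideal argument behind the compactness of \<open>M b\<close>.\<close>

lemma proper_filter_diff_ideal:
  assumes I: "I \<subseteq> B" "zero \<in> I" "\<And>x y. x \<in> I \<Longrightarrow> y \<in> I \<Longrightarrow> join x y \<in> I"
    and b: "b \<in> B" "\<And>y. y \<in> I \<Longrightarrow> \<not> le b y"
  shows "PF {x\<in>B. \<exists>y\<in>I. le (diff b y) x}" (is "PF ?\<Phi>")
proof (rule proper_filterI)
  show "?\<Phi> \<subseteq> B" by blast
  show "?\<Phi> \<noteq> {}" using I b diff_le[of b zero] by auto
  show "zero \<notin> ?\<Phi>"
  proof
    assume "zero \<in> ?\<Phi>"
    then obtain y where y: "y \<in> I" "le (diff b y) zero" by blast
    then have "y \<in> B" using I by blast
    then have "le b y" using y b le_zero_iff diff_eq_zero_imp_le by simp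
    then show False using b y by blast
  qed
  show "y \<in> ?\<Phi>" if xy: "x \<in> ?\<Phi>" "y \<in> B" "le x y" for x y
  proof -
    obtain w where w: "w \<in> I" "le (diff b w) x" "x \<in> B" using xy by blast
    then have "le (diff b w) y" using xy I b trans[of "diff b w" x y] by auto
    then show ?thesis using w xy by blast
  qed
  show "\<exists>z\<in>?\<Phi>. le z x \<and> le z y" if xy: "x \<in> ?\<Phi>" "y \<in> ?\<Phi>" for x y
  proof -
    obtain w w' where w: "w \<in> I" "w' \<in> I" "le (diff b w) x" "le (diff b w') y" "x \<in> B" "y \<in> B"
      using xy by blast
    define v where "v = join w w'"
    have v: "v \<in> I" "v \<in> B" "w \<in> B" "w' \<in> B" using I w unfolding v_def by auto
    have "le w v" "le w' v" using join_ge1 join_ge2 v unfolding v_def by simp_all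
    then have "le (diff b v) (diff b w)" "le (diff b v) (diff b w')"
      using diff_antimono[of b w v] diff_antimono[of b w' v] b v by simp_all
    then have "le (diff b v) x" "le (diff b v) y"
      using trans[of "diff b v" "diff b w" x] trans[of "diff b v" "diff b w'" y] b v w by simp_all
    moreover have "diff b v \<in> ?\<Phi>" using v b refl[of "diff b v"] by auto
    ultimately show ?thesis by blast
  qed
qed

lemma M_finite_subcover:
  assumes S: "S \<subseteq> B" and b: "b \<in> B" and cover: "M b \<subseteq> \<Union>(M ` S)"
  shows "\<exists>T. T \<subseteq> S \<and> finite T \<and> M b \<subseteq> \<Union>(M ` T)"
proof (rule ccontr)
  assume no_subcover: "\<not> ?thesis"
  define I where "I = {y\<in>B. \<exists>T. finite T \<and> T \<subseteq> S \<and> M y \<subseteq> \<Union>(M ` T)}"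
  have I: "I \<subseteq> B" "zero \<in> I" "\<And>x y. x \<in> I \<Longrightarrow> y \<in> I \<Longrightarrow> join x y \<in> I"
  proof -
    show "I \<subseteq> B" "zero \<in> I" unfolding I_def using M_zero by auto
    show "join x y \<in> I" if xy: "x \<in> I" "y \<in> I" for x y
    proof -
      obtain T T' where "finite T" "T \<subseteq> S" "M x \<subseteq> \<Union>(M ` T)" "finite T'" "T' \<subseteq> S"
        "M y \<subseteq> \<Union>(M ` T')" "x \<in> B" "y \<in> B"
        using xy unfolding I_def by blast
      then show ?thesis unfolding I_def using M_join[of x y] by (intro CollectI conjI exI[of _ "T \<union> T'"]) auto
    qed
  qed
  have "\<not> le b y" if "y \<in> I" for y
    using that no_subcover M_mono[OF b, of y] unfolding I_def by blast
  then obtain F where F: "F \<in> UF" "{x\<in>B. \<exists>y\<in>I. le (diff b y) x} \<subseteq> F"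
    using ultrafilter_extension[OF proper_filter_diff_ideal[OF I b]] by blast
  have PF: "PF F" using ultrafilter_proper[OF F(1)] .
  have "b \<in> {x\<in>B. \<exists>y\<in>I. le (diff b y) x}" using I(2) b diff_le[of b zero] zero_in by blast
  then have "b \<in> F" using F(2) by blast
  then obtain c where c: "c \<in> S" "c \<in> F" using cover F unfolding M_set_def by blast
  have cB: "c \<in> B" using c S by blast
  then have "c \<in> I" unfolding I_def using c by (intro CollectI conjI exI[of _ "{c}"]) auto
  then have "diff b c \<in> {x\<in>B. \<exists>y\<in>I. le (diff b y) x}" using b cB refl[of "diff b c"] by auto
  then have "meet (diff b c) c \<in> F" using proper_filter_meet[OF PF] F(2) c by blast
  then show False using diff_meet[OF b cB] proper_filter_zero[OF PF] by simp
qed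

lemma M_cover_bound:
  assumes S: "S \<subseteq> B" "zero \<in> S" "\<And>x y. x \<in> S \<Longrightarrow> y \<in> S \<Longrightarrow> join x y \<in> S"
    and b: "b \<in> B" and cover: "M b \<subseteq> \<Union>(M ` S)"
  shows "\<exists>y\<in>S. le b y"
proof -
  obtain T where T: "T \<subseteq> S" "finite T" "M b \<subseteq> \<Union>(M ` T)"
    using M_finite_subcover[OF S(1) b cover] by blast
  obtain y where y: "y \<in> S" "\<Union>(M ` T) = M y"
    using M_Union_finite[OF S T(2,1)] by blast
  then have "le b y" using M_subset_iff[OF b, of y] S(1) T(3) by blast
  then show ?thesis using y(1) by blast
qed

abbreviation TB where "TB \<equiv> dual_B_top B le"

lemma M_base: "\<forall>s1\<in>M ` B. \<forall>s2\<in>M ` B. \<forall>x\<in>s1 \<inter> s2. \<exists>s3\<in>M ` B. x \<in> s3 \<and> s3 \<subseteq> s1 \<inter> s2"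
proof (intro ballI)
  fix s1 s2 x assume s: "s1 \<in> M ` B" "s2 \<in> M ` B" "x \<in> s1 \<inter> s2"
  then obtain a b where ab: "a \<in> B" "b \<in> B" "s1 = M a" "s2 = M b" by blast
  then have "M (meet a b) = s1 \<inter> s2" using M_meet by simp
  then show "\<exists>s3\<in>M ` B. x \<in> s3 \<and> s3 \<subseteq> s1 \<inter> s2" using s(3) meet_in[OF ab(1,2)] by blast
qed

lemma M_open: "b \<in> B \<Longrightarrow> openin TB (M b)"
  unfolding dual_B_top_def by (rule topology_generated_by_Basis) blast

lemma M_compact: assumes b: "b \<in> B" shows "compactin TB (M b)"
  unfolding dual_B_top_def
proof (rule compactin_generated_topology[OF M_base])
  show "M b \<subseteq> \<Union>(M ` B)" using b by blast
  fix S' assume S': "S' \<subseteq> M ` B" "M b \<subseteq> \<Union>S'"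
  define S0 where "S0 = {c\<in>B. M c \<in> S'}"
  have "S' = M ` S0" using S' unfolding S0_def by blast
  then obtain T0 where "T0 \<subseteq> S0" "finite T0" "M b \<subseteq> \<Union>(M ` T0)"
    using M_finite_subcover[of S0 b] b S' unfolding S0_def by auto
  then show "\<exists>T. T \<subseteq> S' \<and> finite T \<and> M b \<subseteq> \<Union>T"
    unfolding S0_def by (intro exI[of _ "M ` T0"]) auto
qed

lemma compact_opens_dual: "compact_opens TB = M ` B"
proof
  show "M ` B \<subseteq> compact_opens TB" unfolding compact_opens_def using M_open M_compact by blast
  show "compact_opens TB \<subseteq> M ` B"
  proof
    fix U assume "U \<in> compact_opens TB"
    then have U: "openin TB U" "compactin TB U" unfolding compact_opens_def by auto
    define S' where "S' = {s \<in> M ` B. s \<subseteq> U}"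
    have "\<forall>x\<in>U. \<exists>s\<in>M ` B. x \<in> s \<and> s \<subseteq> U"
      using generated_topology_local_base[OF M_base] U(1) unfolding dual_B_top_def by blast
    then have "U \<subseteq> \<Union>S'" unfolding S'_def by blast
    moreover have "\<forall>s\<in>S'. openin TB s" unfolding S'_def using M_open by blast
    ultimately obtain \<F> where \<F>: "finite \<F>" "\<F> \<subseteq> S'" "U \<subseteq> \<Union>\<F>"
      using U(2) unfolding compactin_def by blast
    then have "U = \<Union>\<F>" unfolding S'_def by blast
    moreover obtain T where T: "T \<subseteq> B" "finite T" "\<F> = M ` T"
      using \<F> finite_subset_image[of \<F> M B] unfolding S'_def by blast
    moreover obtain y where "y \<in> B" "\<Union>(M ` T) = M y"
      using M_Union_finite[OF subset_refl zero_in join_in T(2,1)] by blast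
    ultimately show "U \<in> M ` B" by blast
  qed
qed

end

locale bool_set =
  fixes X :: "'x set" and B :: "'b set" and le :: "'b \<Rightarrow> 'b \<Rightarrow> bool"
    and p :: "'x \<Rightarrow> 'b" and res :: "'b \<Rightarrow> 'b \<Rightarrow> 'x \<Rightarrow> 'x"
  assumes boolean_set: "boolean_set X B le p res"
begin

sublocale gen_ba B le
  using boolean_set unfolding boolean_set_def by unfold_locales blast

abbreviation bsle where "bsle \<equiv> bs_le B le p res"
abbreviation rs where "rs x f \<equiv> res (p x) f x"

lemma p_in: "x \<in> X \<Longrightarrow> p x \<in> B"
  and p_surj: "e \<in> B \<Longrightarrow> \<exists>x\<in>X. p x = e"
  and rs_in: "x \<in> X \<Longrightarrow> f \<in> B \<Longrightarrow> le f (p x) \<Longrightarrow> rs x f \<in> X"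
  and p_rs: "x \<in> X \<Longrightarrow> f \<in> B \<Longrightarrow> le f (p x) \<Longrightarrow> p (rs x f) = f"
  and rs_id: "x \<in> X \<Longrightarrow> rs x (p x) = x"
  using boolean_set unfolding boolean_set_def by blast+

lemma rs_rs: "x \<in> X \<Longrightarrow> f \<in> B \<Longrightarrow> g \<in> B \<Longrightarrow> le g f \<Longrightarrow> le f (p x) \<Longrightarrow> rs (rs x f) g = rs x g"
proof -
  assume "x \<in> X" "f \<in> B" "g \<in> B" "le g f" "le f (p x)"
  moreover have "\<forall>x\<in>X. \<forall>f\<in>B. \<forall>g\<in>B. le g f \<and> le f (p x) \<longrightarrow> res f g (rs x f) = rs x g"
    using boolean_set unfolding boolean_set_def by blast
  ultimately show ?thesis using p_rs by simp
qed

lemma ex_bottom: "\<exists>z. is_least X bsle z \<and> (\<forall>x\<in>X. is_least B le (p x) \<longrightarrow> x = z)"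
  and compatible_sup_axiom: "\<forall>x\<in>X. \<forall>y\<in>X. (\<exists>m. is_inf X bsle x y m \<and> is_inf B le (p x) (p y) (p m))
        \<longrightarrow> (\<exists>s. is_sup X bsle x y s)"
  using boolean_set unfolding boolean_set_def by blast+

lemma bsle_iff: "bsle x y \<longleftrightarrow> le (p x) (p y) \<and> x = rs y (p x)"
  unfolding bs_le_def by simp

lemma bsle_rs: "x \<in> X \<Longrightarrow> f \<in> B \<Longrightarrow> le f (p x) \<Longrightarrow> bsle (rs x f) x"
  unfolding bsle_iff using p_rs by simp

lemma bsle_refl: "x \<in> X \<Longrightarrow> bsle x x"
  unfolding bsle_iff using rs_id refl p_in by simp

definition bottom where
  "bottom = (SOME z. is_least X bsle z \<and> (\<forall>x\<in>X. is_least B le (p x) \<longrightarrow> x = z))"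

lemma bottom_in: "bottom \<in> X"
  and bottom_bsle: "x \<in> X \<Longrightarrow> bsle bottom x"
  and eq_bottom: "x \<in> X \<Longrightarrow> p x = zero \<Longrightarrow> x = bottom"
proof -
  have least: "is_least X bsle bottom" and unique: "\<forall>x\<in>X. is_least B le (p x) \<longrightarrow> x = bottom"
    using someI_ex[OF ex_bottom] unfolding bottom_def by blast+
  show "bottom \<in> X" "x \<in> X \<Longrightarrow> bsle bottom x" using least unfolding is_least_def by blast+
  show "x \<in> X \<Longrightarrow> p x = zero \<Longrightarrow> x = bottom" using unique[rule_format, of x] is_least_zero by simp
qed

lemma p_bottom: "p bottom = zero"
  using p_surj[OF zero_in] eq_bottom by blast

lemma rs_zero: assumes "x \<in> X" shows "rs x zero = bottom"
  using eq_bottom rs_in[OF assms zero_in] p_rs[OF assms zero_in] zero_le[OF p_in[OF assms]] by simp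

lemma bsle_imp_le: "bsle x y \<Longrightarrow> le (p x) (p y)"
  and bsle_imp_eq: "bsle x y \<Longrightarrow> x = rs y (p x)"
  unfolding bsle_iff by simp_all

lemma rs_bsle:
  assumes "g \<in> X" "h \<in> X" "bsle h g" "c \<in> B" "le c (p h)" shows "rs g c = rs h c"
proof -
  have "rs h c = rs (rs g (p h)) c" using bsle_imp_eq[OF assms(3)] by simp
  also have "\<dots> = rs g c" using rs_rs[of g "p h" c] assms p_in bsle_imp_le by simp
  finally show ?thesis by simp
qed

text \<open>By \<open>compatible_inf\<close>, compatibility is exactly the hypothesis of the join axiom of a Boolean
  set.\<close>

definition compatible where
  "compatible x y \<longleftrightarrow> rs x (meet (p x) (p y)) = rs y (meet (p x) (p y))"

lemma compatible_inf:
  assumes x: "x \<in> X" and y: "y \<in> X" and xy: "compatible x y"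
  shows "is_inf X bsle x y (rs x (meet (p x) (p y)))"
  unfolding is_inf_def
proof (intro conjI ballI impI)
  define e where "e = meet (p x) (p y)"
  have e: "e \<in> B" "le e (p x)" "le e (p y)" using p_in x y meet_le1 meet_le2 unfolding e_def by auto
  show "rs x (meet (p x) (p y)) \<in> X" using rs_in[OF x e(1,2)] unfolding e_def .
  show "bsle (rs x (meet (p x) (p y))) x" using bsle_rs[OF x e(1,2)] unfolding e_def .
  show "bsle (rs x (meet (p x) (p y))) y"
    using bsle_rs[OF y e(1,3)] xy unfolding e_def compatible_def by simp
  fix w assume w: "w \<in> X" "bsle w x \<and> bsle w y"
  have pw: "p w \<in> B" using p_in w by simp
  have le: "le (p w) e"
    using meet_greatest[of "p x" "p y" "p w"] p_in x y pw w bsle_imp_le unfolding e_def by blast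
  have "w = rs x (p w)" using w bsle_imp_eq[of w x] by simp
  also have "\<dots> = rs (rs x e) (p w)" using rs_rs[OF x e(1) pw le e(2)] by simp
  finally show "bsle w (rs x (meet (p x) (p y)))"
    unfolding bsle_iff e_def[symmetric] using le p_rs[OF x e(1,2)] by simp
qed

lemma compatible_sup:
  assumes x: "x \<in> X" and y: "y \<in> X" and xy: "compatible x y"
  shows "\<exists>s. is_sup X bsle x y s \<and> p s = join (p x) (p y)"
proof -
  have pxy: "p x \<in> B" "p y \<in> B" using x y p_in by auto
  have "is_inf B le (p x) (p y) (p (rs x (meet (p x) (p y))))"
    using p_rs[OF x meet_in[OF pxy] meet_le1[OF pxy]] is_inf_meet[OF pxy] by simp
  then obtain s where s: "is_sup X bsle x y s"
    using compatible_sup_axiom x y compatible_inf[OF x y xy] by blast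
  then have sX: "s \<in> X" "bsle x s" "bsle y s" unfolding is_sup_def by auto
  define j where "j = join (p x) (p y)"
  have j: "j \<in> B" "le (p x) j" "le (p y) j" using pxy join_ge1 join_ge2 unfolding j_def by auto
  have js: "le j (p s)"
    using join_least[OF pxy p_in[OF sX(1)]] bsle_imp_le sX unfolding j_def by blast
  define s' where "s' = rs s j"
  have s': "s' \<in> X" "p s' = j" using rs_in[OF sX(1) j(1) js] p_rs[OF sX(1) j(1) js]
    unfolding s'_def by auto
  have "bsle x s'" "bsle y s'"
    unfolding bsle_iff s'_def using rs_rs[OF sX(1) j(1) pxy(1) j(2) js] rs_rs[OF sX(1) j(1) pxy(2) j(3) js]
      bsle_imp_eq[OF sX(2)] bsle_imp_eq[OF sX(3)] s' j unfolding s'_def by auto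
  then have "bsle s s'" using s s' unfolding is_sup_def by blast
  then have "le (p s) j" using bsle_imp_le s'(2) by metis
  then have "p s = j" using antisym[OF p_in[OF sX(1)] j(1) _ js] by simp
  then show ?thesis using s unfolding j_def by blast
qed

lemma bsle_common_compatible:
  assumes "x \<in> X" "y \<in> X" "s \<in> X" "bsle x s" "bsle y s"
  shows "compatible x y"
proof -
  have pxy: "p x \<in> B" "p y \<in> B" using assms p_in by auto
  have "rs x (meet (p x) (p y)) = rs s (meet (p x) (p y))"
    using rs_bsle[OF assms(3,1,4)] meet_in[OF pxy] meet_le1[OF pxy] by simp
  also have "\<dots> = rs y (meet (p x) (p y))"
    using rs_bsle[OF assms(3,2,5)] meet_in[OF pxy] meet_le2[OF pxy] by simp
  finally show ?thesis unfolding compatible_def .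
qed

lemma bsle_common_unique:
  assumes x: "x \<in> X" and y: "y \<in> X" and st: "s \<in> X" "t \<in> X"
    and p_st: "p s = join (p x) (p y)" "p t = join (p x) (p y)"
    and below: "bsle x s" "bsle y s" "bsle x t" "bsle y t"
  shows "s = t"
proof -
  obtain u where u: "is_sup X bsle x y u" "p u = join (p x) (p y)"
    using compatible_sup[OF x y bsle_common_compatible[OF x y st(1) below(1,2)]] by blast
  have "u = rs v (p v)" if "v \<in> X" "p v = join (p x) (p y)" "bsle x v" "bsle y v" for v
    using u that bsle_imp_eq unfolding is_sup_def by metis
  then show ?thesis using st p_st below rs_id by metis
qed

lemma extension:
  assumes x: "x \<in> X" and b: "b \<in> B" "le (p x) b" shows "\<exists>y\<in>X. p y = b \<and> bsle x y"
proof -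
  have px: "p x \<in> B" using p_in x by simp
  obtain w where w: "w \<in> X" "p w = diff b (p x)" using p_surj diff_in[OF b(1) px] by blast
  have "meet (p x) (p w) = zero" using diff_meet[OF b(1) px] meet_commute[OF px diff_in[OF b(1) px]] w by simp
  moreover have "rs x zero = rs w zero" using rs_zero[OF x] rs_zero[OF w(1)] by simp
  ultimately have "compatible x w" unfolding compatible_def by simp
  then obtain s where s: "is_sup X bsle x w s" "p s = join (p x) (p w)"
    using compatible_sup[OF x w(1)] by blast
  have "join (p x) (p w) = b"
    using join_diff[OF b(1) px] meet_commute[OF b(1) px] meet_absorb[OF px b] w by simp
  then show ?thesis using s unfolding is_sup_def by auto
qed

lemma eq_if_agree_on_join:
  assumes u: "u \<in> X" and v: "v \<in> X" and cd: "c \<in> B" "d \<in> B"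
    and pu: "p u = join c d" and pv: "p v = join c d"
    and agree_c: "rs u c = rs v c" and agree_d: "rs u d = rs v d"
  shows "u = v"
proof -
  have le: "le c (p u)" "le d (p u)" "le c (p v)" "le d (p v)"
    using join_ge1[OF cd] join_ge2[OF cd] pu pv by auto
  have x: "rs u c \<in> X" "p (rs u c) = c" using rs_in[OF u cd(1) le(1)] p_rs[OF u cd(1) le(1)] by auto
  have y: "rs u d \<in> X" "p (rs u d) = d" using rs_in[OF u cd(2) le(2)] p_rs[OF u cd(2) le(2)] by auto
  show ?thesis
  proof (rule bsle_common_unique[OF x(1) y(1) u v])
    show "p u = join (p (rs u c)) (p (rs u d))" "p v = join (p (rs u c)) (p (rs u d))"
      using pu pv x y by simp_all
    show "bsle (rs u c) u" "bsle (rs u d) u" using bsle_rs[OF u] cd le by auto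
    show "bsle (rs u c) v" "bsle (rs u d) v"
      using bsle_rs[OF v cd(1) le(3)] bsle_rs[OF v cd(2) le(4)] agree_c agree_d by simp_all
  qed
qed

end

section \<open>Ultrafilters of a Boolean set\<close>

context bool_set
begin

abbreviation XPF where "XPF \<equiv> proper_filter X bsle"
abbreviation XUF where "XUF \<equiv> ultrafilters X bsle"

lemma xfilter_subset: "XPF G \<Longrightarrow> G \<subseteq> X"
  and xfilter_nonempty: "XPF G \<Longrightarrow> G \<noteq> {}"
  and xfilter_upward: "XPF G \<Longrightarrow> x \<in> G \<Longrightarrow> y \<in> X \<Longrightarrow> bsle x y \<Longrightarrow> y \<in> G"
  and xfilter_directed: "XPF G \<Longrightarrow> x \<in> G \<Longrightarrow> y \<in> G \<Longrightarrow> \<exists>z\<in>G. bsle z x \<and> bsle z y"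
  unfolding proper_filter_def by blast+

lemma xfilter_bottom: assumes "XPF G" shows "bottom \<notin> G"
proof
  assume "bottom \<in> G"
  then have "X \<subseteq> G" using xfilter_upward[OF assms] bottom_bsle by blast
  then show False using assms unfolding proper_filter_def by blast
qed

lemma xfilterI:
  assumes "G \<subseteq> X" "G \<noteq> {}" "bottom \<notin> G" "\<And>x y. x \<in> G \<Longrightarrow> y \<in> X \<Longrightarrow> bsle x y \<Longrightarrow> y \<in> G"
    "\<And>x y. x \<in> G \<Longrightarrow> y \<in> G \<Longrightarrow> \<exists>z\<in>G. bsle z x \<and> bsle z y"
  shows "XPF G"
  unfolding proper_filter_def using assms bottom_in by blast

lemma xultrafilter_proper: "G \<in> XUF \<Longrightarrow> XPF G"
  and xultrafilter_maximal: "G \<in> XUF \<Longrightarrow> XPF G' \<Longrightarrow> G \<subseteq> G' \<Longrightarrow> G' = G"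
  unfolding ultrafilters_def by blast+

lemma xultrafilter_subset: "G \<in> XUF \<Longrightarrow> G \<subseteq> X"
  using xultrafilter_proper xfilter_subset by blast

lemma proper_filter_image: assumes G: "XPF G" shows "PF (p ` G)"
proof (rule proper_filterI)
  show "p ` G \<subseteq> B" using xfilter_subset[OF G] p_in by blast
  show "p ` G \<noteq> {}" using xfilter_nonempty[OF G] by blast
  show "zero \<notin> p ` G" using eq_bottom xfilter_subset[OF G] xfilter_bottom[OF G] by force
  show "y \<in> p ` G" if xy: "x \<in> p ` G" "y \<in> B" "le x y" for x y
  proof -
    obtain g where g: "g \<in> G" "x = p g" using xy by blast
    then obtain y' where "y' \<in> X" "p y' = y" "bsle g y'"
      using extension[of g y] xfilter_subset[OF G] xy by blast
    then show ?thesis using xfilter_upward[OF G g(1)] by blast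
  qed
  show "\<exists>z\<in>p ` G. le z x \<and> le z y" if xy: "x \<in> p ` G" "y \<in> p ` G" for x y
  proof -
    obtain g g' where g: "g \<in> G" "x = p g" "g' \<in> G" "y = p g'" using xy by blast
    obtain h where "h \<in> G" "bsle h g" "bsle h g'" using xfilter_directed[OF G g(1) g(3)] by blast
    then show ?thesis using g bsle_imp_le by blast
  qed
qed

lemma rs_agree_mono:
  assumes "x \<in> X" "g \<in> X" "c \<in> B" "c' \<in> B" "le c' c" "le c (p x)" "le c (p g)"
    and "rs x c = rs g c"
  shows "rs x c' = rs g c'"
  using rs_rs[of x c c'] rs_rs[of g c c'] assms by simp

definition germs where
  "germs S F = {x\<in>X. \<exists>g\<in>S. \<exists>c\<in>F. le c (p g) \<and> le c (p x) \<and> rs x c = rs g c}"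

lemma germsI:
  "x \<in> X \<Longrightarrow> g \<in> S \<Longrightarrow> c \<in> F \<Longrightarrow> le c (p g) \<Longrightarrow> le c (p x) \<Longrightarrow> rs x c = rs g c \<Longrightarrow> x \<in> germs S F"
  unfolding germs_def by blast

lemma germsE:
  assumes "x \<in> germs S F"
  obtains g c where "x \<in> X" "g \<in> S" "c \<in> F" "le c (p g)" "le c (p x)" "rs x c = rs g c"
  using assms unfolding germs_def by blast

lemma rs_germsI:
  assumes "g \<in> X" "g \<in> S" "c \<in> F" "c \<in> B" "le c (p g)" shows "rs g c \<in> germs S F"
proof (rule germsI)
  show "rs g c \<in> X" "le c (p (rs g c))" "rs (rs g c) c = rs g c"
    using rs_in[OF assms(1,4,5)] p_rs[OF assms(1,4,5)] rs_id[OF rs_in[OF assms(1,4,5)]] refl[OF assms(4)]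
    by simp_all
qed (use assms in simp_all)

lemma germs_directed:
  assumes S: "S \<subseteq> X" and F: "PF F" and SF: "p ` S \<subseteq> F"
    and dirS: "\<And>g g'. g \<in> S \<Longrightarrow> g' \<in> S \<Longrightarrow> \<exists>h\<in>S. bsle h g \<and> bsle h g'"
    and x: "x \<in> germs S F" and y: "y \<in> germs S F"
  shows "\<exists>z\<in>germs S F. bsle z x \<and> bsle z y"
proof -
  obtain g c where gc: "x \<in> X" "g \<in> S" "c \<in> F" "le c (p g)" "le c (p x)" "rs x c = rs g c"
    using x by (rule germsE)
  obtain g' c' where gc': "y \<in> X" "g' \<in> S" "c' \<in> F" "le c' (p g')" "le c' (p y)" "rs y c' = rs g' c'"
    using y by (rule germsE)
  obtain h where h: "h \<in> S" "bsle h g" "bsle h g'" using dirS gc(2) gc'(2) by blast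
  have X: "g \<in> X" "g' \<in> X" "h \<in> X" using S gc gc' h by auto
  have PB: "p x \<in> B" "p y \<in> B" "p g \<in> B" "p g' \<in> B" "p h \<in> B" using X gc gc' p_in by auto
  have cB: "c \<in> B" "c' \<in> B" using gc gc' proper_filter_subset[OF F] by auto
  define e where "e = meet (meet c c') (p h)"
  have eF: "e \<in> F"
    using proper_filter_meet[OF F proper_filter_meet[OF F gc(3) gc'(3)]] SF h(1) unfolding e_def by blast
  have eB: "e \<in> B" and e_le: "le e c" "le e c'" "le e (p h)"
    using cB PB meet_le1 meet_le2 trans[of e "meet c c'" c] trans[of e "meet c c'" c'] unfolding e_def
    by simp_all
  have ex: "rs x e = rs h e"
    using rs_agree_mono[OF gc(1) X(1) cB(1) eB e_le(1) gc(5) gc(4) gc(6)] rs_bsle[OF X(1,3) h(2) eB e_le(3)]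
    by simp
  have ey: "rs y e = rs h e"
    using rs_agree_mono[OF gc'(1) X(2) cB(2) eB e_le(2) gc'(5) gc'(4) gc'(6)] rs_bsle[OF X(2,3) h(3) eB e_le(3)]
    by simp
  have lx: "le e (p x)" and ly: "le e (p y)"
    using trans[OF eB cB(1) PB(1) e_le(1) gc(5)] trans[OF eB cB(2) PB(2) e_le(2) gc'(5)] .
  have "rs x e \<in> germs S F" using rs_germsI[OF X(3) h(1) eF eB e_le(3)] ex by simp
  moreover have "bsle (rs x e) x" "bsle (rs x e) y"
    using bsle_rs[OF gc(1) eB lx] bsle_rs[OF gc'(1) eB ly] ex ey by simp_all
  ultimately show ?thesis by blast
qed

lemma germs_proper_filter:
  assumes S: "S \<subseteq> X" "S \<noteq> {}" and F: "PF F" "p ` S \<subseteq> F"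
    and dirS: "\<And>g g'. g \<in> S \<Longrightarrow> g' \<in> S \<Longrightarrow> \<exists>h\<in>S. bsle h g \<and> bsle h g'"
  shows "XPF (germs S F)" "S \<subseteq> germs S F"
proof -
  have FB: "F \<subseteq> B" using proper_filter_subset[OF F(1)] .
  show sub: "S \<subseteq> germs S F"
  proof
    fix g assume g: "g \<in> S"
    then have "g \<in> X" "p g \<in> F" "p g \<in> B" using S F p_in by auto
    then show "g \<in> germs S F" using germsI[of g g S "p g" F] g refl by simp
  qed
  show "XPF (germs S F)"
  proof (rule xfilterI)
    show "germs S F \<subseteq> X" unfolding germs_def by blast
    show "germs S F \<noteq> {}" using sub S by blast
    show "bottom \<notin> germs S F"
    proof
      assume "bottom \<in> germs S F"
      then obtain c where "c \<in> F" "le c (p bottom)" by (rule germsE) blast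
      then show False using le_zero_iff FB p_bottom proper_filter_zero[OF F(1)] by auto
    qed
    show "y \<in> germs S F" if xy: "x \<in> germs S F" "y \<in> X" "bsle x y" for x y
    proof -
      obtain g c where gc: "x \<in> X" "g \<in> S" "c \<in> F" "le c (p g)" "le c (p x)" "rs x c = rs g c"
        using xy(1) by (rule germsE)
      have cB: "c \<in> B" using gc FB by blast
      have "le c (p y)" using trans[OF cB p_in[OF gc(1)] p_in[OF xy(2)] gc(5) bsle_imp_le[OF xy(3)]] .
      moreover have "rs y c = rs x c" using rs_bsle[OF xy(2) gc(1) xy(3) cB gc(5)] .
      ultimately show ?thesis using germsI[OF xy(2) gc(2) gc(3) gc(4)] gc by simp
    qed
    show "\<And>x y. x \<in> germs S F \<Longrightarrow> y \<in> germs S F \<Longrightarrow> \<exists>z\<in>germs S F. bsle z x \<and> bsle z y"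
      using germs_directed[OF S(1) F dirS] by blast
  qed
qed

lemma germs_singleton:
  assumes F: "PF F" and a: "a \<in> X" "p a \<in> F" shows "XPF (germs {a} F)" "a \<in> germs {a} F"
  using germs_proper_filter[of "{a}" F] F a bsle_refl by auto

lemma germs_subset_imp_image_supset:
  assumes G: "XPF G" and F: "PF F" and a: "a \<in> X" "p a \<in> F" and sub: "germs {a} F \<subseteq> G"
  shows "F \<subseteq> p ` G"
proof
  fix f assume f: "f \<in> F"
  have FB: "F \<subseteq> B" using proper_filter_subset[OF F] .
  have pa: "p a \<in> B" using p_in a by simp
  define c where "c = meet f (p a)"
  have c: "c \<in> F" "c \<in> B" "le c (p a)" "le c f"
    using proper_filter_meet[OF F f a(2)] FB f pa meet_le1 meet_le2 unfolding c_def by auto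
  have "rs a c \<in> G" using rs_germsI[OF a(1) _ c(1,2,3)] sub by blast
  then have "c \<in> p ` G" using p_rs[OF a(1) c(2,3)] by force
  then show "f \<in> p ` G" using proper_filter_upward[OF proper_filter_image[OF G]] c f FB by blast
qed

lemma germs_ultrafilter:
  assumes F: "F \<in> UF" and a: "a \<in> X" "p a \<in> F" shows "germs {a} F \<in> XUF"
proof -
  have PF: "PF F" using ultrafilter_proper[OF F] .
  note g = germs_singleton[OF PF a]
  have "G = germs {a} F" if G: "XPF G" "germs {a} F \<subseteq> G" for G
  proof
    show "germs {a} F \<subseteq> G" by (rule G(2))
    have "p ` G = F"
      using ultrafilter_maximal[OF F proper_filter_image[OF G(1)]]
        germs_subset_imp_image_supset[OF G(1) PF a G(2)] by blast
    show "G \<subseteq> germs {a} F"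
    proof
      fix x assume x: "x \<in> G"
      obtain w where w: "w \<in> G" "bsle w x" "bsle w a" using xfilter_directed[OF G(1) x] g G by blast
      have X: "x \<in> X" "w \<in> X" using x w xfilter_subset[OF G(1)] by auto
      have "p w \<in> F" using \<open>p ` G = F\<close> w by blast
      moreover have "rs x (p w) = rs a (p w)" using bsle_imp_eq w by metis
      ultimately show "x \<in> germs {a} F"
        using germsI[OF X(1), of a "{a}" "p w" F] bsle_imp_le[OF w(2)] bsle_imp_le[OF w(3)] by simp
    qed
  qed
  then show ?thesis unfolding ultrafilters_def using g by blast
qed

lemma image_germs:
  assumes F: "F \<in> UF" and a: "a \<in> X" "p a \<in> F" shows "p ` germs {a} F = F"
proof
  have PF: "PF F" using ultrafilter_proper[OF F] .
  show "F \<subseteq> p ` germs {a} F"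
    using germs_subset_imp_image_supset[OF germs_singleton(1)[OF PF a] PF a] by blast
  show "p ` germs {a} F \<subseteq> F"
  proof
    fix y assume "y \<in> p ` germs {a} F"
    then obtain x where x: "x \<in> germs {a} F" "y = p x" by blast
    obtain c where "x \<in> X" "c \<in> F" "le c (p x)" using x(1) by (rule germsE) blast
    then show "y \<in> F" using proper_filter_upward[OF PF] p_in x by simp
  qed
qed

lemma ultrafilter_image: assumes G: "G \<in> XUF" shows "p ` G \<in> UF"
proof -
  have XG: "XPF G" using xultrafilter_proper[OF G] .
  have PG: "PF (p ` G)" using proper_filter_image[OF XG] .
  have "F' = p ` G" if F': "PF F'" "p ` G \<subseteq> F'" for F'
  proof
    show "p ` G \<subseteq> F'" by (rule F'(2))
    have dirG: "\<exists>h\<in>G. bsle h g \<and> bsle h g'" if "g \<in> G" "g' \<in> G" for g g'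
      using xfilter_directed[OF XG that] by blast
    note gp = germs_proper_filter[OF xfilter_subset[OF XG] xfilter_nonempty[OF XG] F' dirG]
    have eq: "germs G F' = G" using xultrafilter_maximal[OF G gp(1) gp(2)] .
    show "F' \<subseteq> p ` G"
    proof
      fix f assume f: "f \<in> F'"
      have FB: "F' \<subseteq> B" using proper_filter_subset F' by blast
      obtain g where g: "g \<in> G" using xfilter_nonempty[OF XG] by blast
      have gX: "g \<in> X" using g xfilter_subset[OF XG] by blast
      have pg: "p g \<in> B" "p g \<in> F'" using p_in gX F' g by auto
      define c where "c = meet f (p g)"
      have c: "c \<in> F'" "c \<in> B" "le c (p g)" "le c f"
        using proper_filter_meet[OF F'(1) f pg(2)] FB f pg meet_le1 meet_le2 unfolding c_def by auto
      have "rs g c \<in> G" using rs_germsI[OF gX g c(1,2,3)] eq by simp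
      then have "c \<in> p ` G" using p_rs[OF gX c(2,3)] by force
      then show "f \<in> p ` G" using proper_filter_upward[OF PG] c f FB by blast
    qed
  qed
  then show ?thesis unfolding ultrafilters_def using PG by blast
qed

lemma ultrafilter_eq_germs: assumes G: "G \<in> XUF" and a: "a \<in> G" shows "G = germs {a} (p ` G)"
proof
  have XG: "XPF G" using xultrafilter_proper[OF G] .
  have aX: "a \<in> X" using a xfilter_subset[OF XG] by blast
  show "G \<subseteq> germs {a} (p ` G)"
  proof
    fix x assume x: "x \<in> G"
    obtain w where w: "w \<in> G" "bsle w x" "bsle w a" using xfilter_directed[OF XG x a] by blast
    have X: "x \<in> X" "w \<in> X" using x w xfilter_subset[OF XG] by auto
    have "rs x (p w) = rs a (p w)" using bsle_imp_eq w by metis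
    then show "x \<in> germs {a} (p ` G)"
      using germsI[OF X(1), of a "{a}" "p w" "p ` G"] bsle_imp_le[OF w(2)] bsle_imp_le[OF w(3)] w by simp
  qed
  show "germs {a} (p ` G) \<subseteq> G"
  proof
    fix x assume "x \<in> germs {a} (p ` G)"
    then obtain c where gc: "x \<in> X" "c \<in> p ` G" "le c (p a)" "le c (p x)" "rs x c = rs a c"
      by (rule germsE) blast
    obtain g where g: "g \<in> G" "c = p g" using gc by blast
    obtain h where h: "h \<in> G" "bsle h a" "bsle h g" using xfilter_directed[OF XG a g(1)] by blast
    have X: "g \<in> X" "h \<in> X" using g h xfilter_subset[OF XG] by auto
    have cB: "c \<in> B" using g X p_in by simp
    have ph: "p h \<in> B" "le (p h) c" using p_in X bsle_imp_le h g by auto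
    have "rs x (p h) = rs a (p h)" using rs_agree_mono[OF gc(1) aX cB ph(1,2) gc(4,3,5)] .
    also have "\<dots> = h" using bsle_imp_eq[OF h(2)] by simp
    finally have "bsle h x" unfolding bsle_iff using trans[OF ph(1) cB p_in[OF gc(1)] ph(2) gc(4)] by simp
    then show "x \<in> G" using xfilter_upward[OF XG h(1) gc(1)] by blast
  qed
qed

end

section \<open>The dual \'etal\'e space\<close>

context bool_set
begin

abbreviation L where "L \<equiv> L_set X B le p res"
abbreviation TX where "TX \<equiv> dual_X_top X B le p res"

lemma L_eq: "L a = {G \<in> XUF. a \<in> G}"
  unfolding L_set_def dual_X_def by simp

lemma L_memberI: "a \<in> G \<Longrightarrow> G \<in> XUF \<Longrightarrow> G \<in> L a"
  unfolding L_eq by blast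

lemma L_memberD:
  assumes "G \<in> L a"
  shows "G \<in> XUF" "a \<in> G" "G = germs {a} (p ` G)" "p ` G \<in> M (p a)"
proof -
  show G: "G \<in> XUF" "a \<in> G" using assms unfolding L_eq by auto
  show "G = germs {a} (p ` G)" using ultrafilter_eq_germs[OF G] .
  show "p ` G \<in> M (p a)" unfolding M_set_def using ultrafilter_image[OF G(1)] imageI[OF G(2), of p] by simp
qed

lemma germs_in_L: assumes "a \<in> X" "F \<in> UF" "p a \<in> F" shows "germs {a} F \<in> L a"
  using L_memberI[OF germs_singleton(2)[OF ultrafilter_proper[OF assms(2)] assms(1,3)]
      germs_ultrafilter[OF assms(2,1,3)]] .

lemma image_L: assumes a: "a \<in> X" shows "(\<lambda>G. p ` G) ` L a = M (p a)"
proof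
  show "(\<lambda>G. p ` G) ` L a \<subseteq> M (p a)" using L_memberD(4) by blast
  show "M (p a) \<subseteq> (\<lambda>G. p ` G) ` L a"
  proof
    fix F assume "F \<in> M (p a)"
    then have F: "F \<in> UF" "p a \<in> F" unfolding M_set_def by auto
    then have "germs {a} F \<in> L a" "p ` germs {a} F = F"
      using germs_in_L[OF a] image_germs[OF F(1) a F(2)] by auto
    then show "F \<in> (\<lambda>G. p ` G) ` L a"
      using rev_image_eqI[of "germs {a} F" "L a" F "\<lambda>G. p ` G"] by simp
  qed
qed

lemma inj_on_image_L: "inj_on (\<lambda>G. p ` G) (L a)"
  by (rule inj_onI) (metis L_memberD(3))

lemma L_mono: assumes "a \<in> X" "bsle w a" shows "L w \<subseteq> L a"
proof
  fix G assume "G \<in> L w"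
  then have G: "G \<in> XUF" "w \<in> G" using L_memberD by auto
  then have "a \<in> G" using xfilter_upward[OF xultrafilter_proper[OF G(1)]] assms by blast
  then show "G \<in> L a" using L_memberI G by blast
qed

lemma L_bottom: "L bottom = {}"
  unfolding L_eq using xultrafilter_proper xfilter_bottom by blast

lemma topspace_TX: "topspace TX = XUF"
proof -
  have "\<exists>a\<in>X. G \<in> L a" if G: "G \<in> XUF" for G
  proof -
    obtain a where "a \<in> G" using xfilter_nonempty[OF xultrafilter_proper[OF G]] by blast
    then show ?thesis using L_memberI[OF _ G] xultrafilter_subset[OF G] by blast
  qed
  then have "\<Union>(L ` X) = XUF" unfolding L_eq by blast
  then show ?thesis unfolding dual_X_top_def by simp
qed

lemma L_base: "\<forall>s1\<in>L ` X. \<forall>s2\<in>L ` X. \<forall>G\<in>s1 \<inter> s2. \<exists>s3\<in>L ` X. G \<in> s3 \<and> s3 \<subseteq> s1 \<inter> s2"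
proof (intro ballI)
  fix s1 s2 G assume s: "s1 \<in> L ` X" "s2 \<in> L ` X" "G \<in> s1 \<inter> s2"
  then obtain a b where ab: "a \<in> X" "b \<in> X" "s1 = L a" "s2 = L b" by blast
  then have G: "G \<in> XUF" "a \<in> G" "b \<in> G" using s L_memberD by auto
  obtain w where w: "w \<in> G" "bsle w a" "bsle w b"
    using xfilter_directed[OF xultrafilter_proper[OF G(1)] G(2,3)] by blast
  have "w \<in> X" using w xultrafilter_subset G by blast
  moreover have "G \<in> L w" using L_memberI w G by blast
  moreover have "L w \<subseteq> s1 \<inter> s2" using L_mono ab w by blast
  ultimately show "\<exists>s3\<in>L ` X. G \<in> s3 \<and> s3 \<subseteq> s1 \<inter> s2" by blast
qed

lemma L_open: "a \<in> X \<Longrightarrow> openin TX (L a)"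
  unfolding dual_X_top_def by (rule topology_generated_by_Basis) blast

lemma L_rs:
  assumes a: "a \<in> X" and f: "f \<in> B" "le f (p a)"
  shows "{G \<in> L a. f \<in> p ` G} = L (rs a f)"
proof
  show "{G \<in> L a. f \<in> p ` G} \<subseteq> L (rs a f)"
  proof
    fix G assume G: "G \<in> {G \<in> L a. f \<in> p ` G}"
    then have "rs a f \<in> germs {a} (p ` G)" using rs_germsI[OF a _ _ f(1,2)] by blast
    then show "G \<in> L (rs a f)" using L_memberD(1,3) L_memberI G by blast
  qed
  show "L (rs a f) \<subseteq> {G \<in> L a. f \<in> p ` G}"
    using L_mono[OF a bsle_rs[OF a f]] L_memberD(2) p_rs[OF a f] by force
qed

lemma agree_on_join:
  assumes a: "a \<in> X" and b: "b \<in> X" and cd: "c \<in> B" "d \<in> B"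
    and le: "le c (p a)" "le c (p b)" "le d (p a)" "le d (p b)"
    and agree: "rs a c = rs b c" "rs a d = rs b d"
  shows "rs a (join c d) = rs b (join c d)"
proof -
  define j where "j = join c d"
  have j: "j \<in> B" "le c j" "le d j" using cd join_ge1 join_ge2 unfolding j_def by auto
  have ja: "le j (p a)" "le j (p b)"
    using join_least[OF cd p_in[OF a]] join_least[OF cd p_in[OF b]] le unfolding j_def by auto
  show ?thesis unfolding j_def[symmetric]
  proof (rule eq_if_agree_on_join[OF rs_in[OF a j(1) ja(1)] rs_in[OF b j(1) ja(2)] cd])
    show "p (rs a j) = join c d" "p (rs b j) = join c d"
      using p_rs[OF a j(1) ja(1)] p_rs[OF b j(1) ja(2)] unfolding j_def by simp_all
    show "rs (rs a j) c = rs (rs b j) c" "rs (rs a j) d = rs (rs b j) d"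
      using rs_rs[OF a j(1) cd(1) j(2) ja(1)] rs_rs[OF b j(1) cd(1) j(2) ja(2)]
        rs_rs[OF a j(1) cd(2) j(3) ja(1)] rs_rs[OF b j(1) cd(2) j(3) ja(2)] agree by simp_all
  qed
qed

text \<open>By compactness finitely many pieces of agreement cover \<open>M e\<close>, and agreement passes to
  their join.\<close>

lemma agree_if_locally_agree:
  assumes a: "a \<in> X" and b: "b \<in> X" and e: "e \<in> B" "le e (p a)" "le e (p b)"
    and local: "\<And>F. F \<in> M e \<Longrightarrow> \<exists>c\<in>F. le c (p a) \<and> le c (p b) \<and> rs a c = rs b c"
  shows "rs a e = rs b e"
proof -
  have pab: "p a \<in> B" "p b \<in> B" using a b p_in by auto
  define E where "E = {c\<in>B. le c e \<and> rs a c = rs b c}"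
  have below: "le c (p a)" "le c (p b)" if "c \<in> E" for c
    using that e pab trans[of c e] unfolding E_def by auto
  have "\<exists>y\<in>E. le e y"
  proof (rule M_cover_bound[OF _ _ _ e(1)])
    show "E \<subseteq> B" unfolding E_def by blast
    show "zero \<in> E" unfolding E_def using rs_zero a b zero_le e by simp
    show "join x y \<in> E" if "x \<in> E" "y \<in> E" for x y
      using that below agree_on_join[OF a b] join_least[OF _ _ e(1)] unfolding E_def by auto
    show "M e \<subseteq> \<Union>(M ` E)"
    proof
      fix F assume F: "F \<in> M e"
      then obtain c where c: "c \<in> F" "le c (p a)" "le c (p b)" "rs a c = rs b c" using local by blast
      have F': "F \<in> UF" "e \<in> F" using F unfolding M_set_def by auto
      have cB: "c \<in> B" using c ultrafilter_subset F' by blast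
      define c' where "c' = meet c e"
      have c': "c' \<in> B" "le c' c" "le c' e" "c' \<in> F"
        using cB e meet_le1 meet_le2 proper_filter_meet[OF ultrafilter_proper[OF F'(1)] c(1) F'(2)]
        unfolding c'_def by auto
      have "c' \<in> E" using rs_agree_mono[OF a b cB c'(1,2) c(2,3,4)] c' unfolding E_def by blast
      moreover have "F \<in> M c'" unfolding M_set_def using F' c' by blast
      ultimately show "F \<in> \<Union>(M ` E)" by blast
    qed
  qed
  then obtain y where "y \<in> E" "le e y" by blast
  moreover have "y = e" using calculation antisym e(1) unfolding E_def by blast
  ultimately show ?thesis unfolding E_def by blast
qed

end

context bool_set
begin

lemma L_inj: assumes a: "a \<in> X" and b: "b \<in> X" and eq: "L a = L b" shows "a = b"
proof -
  have pe: "p a = p b" using image_L[OF a] image_L[OF b] eq M_inj p_in a b by metis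
  have pa: "p a \<in> B" using p_in a by simp
  have "rs a (p a) = rs b (p a)"
  proof (rule agree_if_locally_agree[OF a b pa refl[OF pa]])
    show "le (p a) (p b)" using pe refl pa by simp
    fix F assume "F \<in> M (p a)"
    then have F: "F \<in> UF" "p a \<in> F" unfolding M_set_def by auto
    have "b \<in> germs {a} F" using germs_in_L[OF a F] eq L_memberD(2) by blast
    then obtain c where "c \<in> F" "le c (p a)" "le c (p b)" "rs b c = rs a c"
      by (rule germsE) blast
    then show "\<exists>c\<in>F. le c (p a) \<and> le c (p b) \<and> rs a c = rs b c" by metis
  qed
  then show ?thesis using rs_id a b pe by metis
qed

lemma L_finite_subcover:
  assumes a: "a \<in> X" and W: "W \<subseteq> X" and cover: "L a \<subseteq> \<Union>(L ` W)"
  shows "\<exists>T. T \<subseteq> W \<and> finite T \<and> L a \<subseteq> \<Union>(L ` T)"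
proof -
  define S where "S = {c\<in>B. le c (p a) \<and> (\<exists>w\<in>W. le c (p w) \<and> rs w c = rs a c)}"
  have pa: "p a \<in> B" using p_in a by simp
  have SB: "S \<subseteq> B" unfolding S_def by blast
  have "M (p a) \<subseteq> \<Union>(M ` S)"
  proof
    fix F assume "F \<in> M (p a)"
    then have F: "F \<in> UF" "p a \<in> F" unfolding M_set_def by auto
    then obtain w where w: "w \<in> W" "germs {a} F \<in> L w" using germs_in_L[OF a F] cover by blast
    then have "w \<in> germs {a} F" using L_memberD(2) by blast
    then obtain c where c: "c \<in> F" "le c (p a)" "le c (p w)" "rs w c = rs a c"
      by (rule germsE) blast
    then have "c \<in> S" unfolding S_def using ultrafilter_subset[OF F(1)] w by blast
    moreover have "F \<in> M c" unfolding M_set_def using F c by blast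
    ultimately show "F \<in> \<Union>(M ` S)" by blast
  qed
  then have "\<exists>T. T \<subseteq> S \<and> finite T \<and> M (p a) \<subseteq> \<Union>(M ` T)" by (rule M_finite_subcover[OF SB pa])
  then obtain T0 where T0: "T0 \<subseteq> S" "finite T0" "M (p a) \<subseteq> \<Union>(M ` T0)" by blast
  have "\<forall>c\<in>T0. \<exists>w. w \<in> W \<and> le c (p w) \<and> rs w c = rs a c" using T0(1) unfolding S_def by blast
  then obtain wf where wf: "\<forall>c\<in>T0. wf c \<in> W \<and> le c (p (wf c)) \<and> rs (wf c) c = rs a c"
    by (rule bchoice[elim_format]) blast
  have "L a \<subseteq> \<Union>(L ` (wf ` T0))"
  proof
    fix G assume G: "G \<in> L a"
    then obtain c where c: "c \<in> T0" "c \<in> p ` G" using L_memberD(4) T0(3) unfolding M_set_def by blast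
    have cS: "le c (p a)" using c T0 unfolding S_def by auto
    have w: "wf c \<in> X" "le c (p (wf c))" "rs (wf c) c = rs a c" using wf c W by auto
    have "wf c \<in> germs {a} (p ` G)" using germsI[OF w(1), of a "{a}" c "p ` G"] c cS w by simp
    then have "G \<in> L (wf c)" using L_memberD(1,3)[OF G] L_memberI by metis
    then show "G \<in> \<Union>(L ` (wf ` T0))" using c by blast
  qed
  then show ?thesis using T0(2) wf by (intro exI[of _ "wf ` T0"]) auto
qed

lemma L_compact: assumes a: "a \<in> X" shows "compactin TX (L a)"
  unfolding dual_X_top_def
proof (rule compactin_generated_topology[OF L_base])
  show "L a \<subseteq> \<Union>(L ` X)" using a by blast
  fix S' assume S': "S' \<subseteq> L ` X" "L a \<subseteq> \<Union>S'"
  define W where "W = {w\<in>X. L w \<in> S'}"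
  have "S' = L ` W" using S' unfolding W_def by blast
  then obtain T where "T \<subseteq> W" "finite T" "L a \<subseteq> \<Union>(L ` T)"
    using L_finite_subcover[OF a, of W] S' unfolding W_def by auto
  then show "\<exists>T. T \<subseteq> S' \<and> finite T \<and> L a \<subseteq> \<Union>T"
    unfolding W_def by (intro exI[of _ "L ` T"]) auto
qed

text \<open>Injectivity of the projection on a local section forces any two basic opens inside it to
  have the same germ wherever both are defined, hence to be compatible.\<close>

lemma compatible_if_in_section:
  assumes a: "a \<in> X" and b: "b \<in> X" and C: "L a \<subseteq> C" "L b \<subseteq> C" "inj_on (\<lambda>G. p ` G) C"
  shows "compatible a b"
  unfolding compatible_def
proof (rule agree_if_locally_agree[OF a b])
  have pab: "p a \<in> B" "p b \<in> B" using a b p_in by auto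
  show "meet (p a) (p b) \<in> B" "le (meet (p a) (p b)) (p a)" "le (meet (p a) (p b)) (p b)"
    using pab meet_le1 meet_le2 by auto
  fix F assume "F \<in> M (meet (p a) (p b))"
  then have F: "F \<in> UF" "meet (p a) (p b) \<in> F" unfolding M_set_def by auto
  have inF: "p a \<in> F" "p b \<in> F"
    using proper_filter_upward[OF ultrafilter_proper[OF F(1)] F(2)] pab meet_le1 meet_le2 by auto
  have "germs {a} F \<in> C" "germs {b} F \<in> C" using germs_in_L a b F(1) inF C by blast+
  moreover have "p ` germs {a} F = p ` germs {b} F"
    using image_germs[OF F(1) a inF(1)] image_germs[OF F(1) b inF(2)] by simp
  ultimately have "germs {a} F = germs {b} F" using inj_onD[OF C(3)] by blast
  then have "b \<in> germs {a} F" using germs_singleton(2)[OF ultrafilter_proper[OF F(1)] b inF(2)] by simp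
  then obtain c where "c \<in> F" "le c (p a)" "le c (p b)" "rs b c = rs a c"
    by (rule germsE) blast
  then show "\<exists>c\<in>F. le c (p a) \<and> le c (p b) \<and> rs a c = rs b c" by metis
qed

lemma L_below_sup:
  assumes a: "a \<in> X" and s: "s \<in> X" "bsle a s" and G: "G \<in> L s" "p a \<in> p ` G"
  shows "G \<in> L a"
proof -
  have "a \<in> germs {s} (p ` G)"
    using germsI[OF a, of s "{s}" "p a" "p ` G"] G(2) bsle_imp_le[OF s(2)] bsle_imp_eq[OF s(2)]
      refl[OF p_in[OF a]] rs_id[OF a] by simp
  then show ?thesis using L_memberD(1,3)[OF G(1)] L_memberI by metis
qed

lemma L_sup:
  assumes a: "a \<in> X" and b: "b \<in> X" and ab: "compatible a b"
  shows "\<exists>s\<in>X. L s = L a \<union> L b"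
proof -
  obtain s where s: "is_sup X bsle a b s" "p s = join (p a) (p b)" using compatible_sup[OF a b ab] by blast
  then have sX: "s \<in> X" "bsle a s" "bsle b s" unfolding is_sup_def by auto
  have "L s \<subseteq> L a \<union> L b"
  proof
    fix G assume G: "G \<in> L s"
    then have "p ` G \<in> M (p a) \<union> M (p b)" using L_memberD(4) s(2) M_join p_in a b by metis
    then show "G \<in> L a \<union> L b"
      using L_below_sup[OF a sX(1,2) G] L_below_sup[OF b sX(1,3) G] unfolding M_set_def by blast
  qed
  moreover have "L a \<union> L b \<subseteq> L s" using L_mono[OF sX(1,2)] L_mono[OF sX(1,3)] by blast
  ultimately show ?thesis using sX(1) by blast
qed

lemma L_Union_finite:
  assumes C: "inj_on (\<lambda>G. p ` G) C"
  shows "finite T \<Longrightarrow> T \<subseteq> {a\<in>X. L a \<subseteq> C} \<Longrightarrow> \<exists>a\<in>X. L a \<subseteq> C \<and> \<Union>(L ` T) \<subseteq> L a"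
proof (induction T rule: finite_induct)
  case empty
  then show ?case using bottom_in L_bottom by (intro bexI[of _ bottom]) auto
next
  case (insert b T)
  then obtain a where a: "a \<in> X" "L a \<subseteq> C" "\<Union>(L ` T) \<subseteq> L a" by blast
  have b: "b \<in> X" "L b \<subseteq> C" using insert by auto
  obtain s where "s \<in> X" "L s = L a \<union> L b"
    using L_sup[OF a(1) b(1) compatible_if_in_section[OF a(1) b(1) a(2) b(2) C]] by blast
  then show ?case using a b by (intro bexI[of _ s]) auto
qed

lemma etale_sections_dual: "etale_sections TX (\<lambda>G. p ` G) = L ` X"
proof
  show "L ` X \<subseteq> etale_sections TX (\<lambda>G. p ` G)"
    unfolding etale_sections_def using L_open L_compact inj_on_image_L by blast
  show "etale_sections TX (\<lambda>G. p ` G) \<subseteq> L ` X"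
  proof
    fix C assume "C \<in> etale_sections TX (\<lambda>G. p ` G)"
    then have C: "openin TX C" "compactin TX C" "inj_on (\<lambda>G. p ` G) C"
      unfolding etale_sections_def by auto
    define S' where "S' = {s \<in> L ` X. s \<subseteq> C}"
    have "\<forall>x\<in>C. \<exists>s\<in>L ` X. x \<in> s \<and> s \<subseteq> C"
      using generated_topology_local_base[OF L_base] C(1) unfolding dual_X_top_def by blast
    then have "C \<subseteq> \<Union>S'" unfolding S'_def by blast
    moreover have "\<forall>s\<in>S'. openin TX s" unfolding S'_def using L_open by blast
    ultimately obtain \<F> where \<F>: "finite \<F>" "\<F> \<subseteq> S'" "C \<subseteq> \<Union>\<F>"
      using C(2) unfolding compactin_def by blast
    define A where "A = {a\<in>X. L a \<subseteq> C}"
    have "\<F> \<subseteq> L ` A" using \<F>(2) unfolding S'_def A_def by blast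
    then have "\<exists>T\<subseteq>A. finite T \<and> \<F> = L ` T" by (rule finite_subset_image[OF \<F>(1)])
    then obtain T where T: "T \<subseteq> A" "finite T" "\<F> = L ` T" by blast
    obtain a where "a \<in> X" "L a \<subseteq> C" "\<Union>(L ` T) \<subseteq> L a" using L_Union_finite[OF C(3) T(2)] T(1) unfolding A_def by blast
    then have "C = L a" using \<F> T by blast
    then show "C \<in> L ` X" using \<open>a \<in> X\<close> by blast
  qed
qed

lemma etale_proj_L: "a \<in> X \<Longrightarrow> etale_proj (\<lambda>G. p ` G) (L a) = M (p a)"
  unfolding etale_proj_def using image_L by simp

lemma etale_res_L:
  assumes a: "a \<in> X" and f: "f \<in> B" "le f (p a)"
  shows "etale_res TX (\<lambda>G. p ` G) (M (p a)) (M f) (L a) = L (rs a f)"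
proof -
  have "G \<in> topspace TX" if "G \<in> L a" for G using that L_memberD(1) topspace_TX by blast
  moreover have "p ` G \<in> M f \<longleftrightarrow> f \<in> p ` G" if "G \<in> L a" for G
    using that L_memberD(1) ultrafilter_image unfolding M_set_def by blast
  ultimately have "etale_res TX (\<lambda>G. p ` G) (M (p a)) (M f) (L a) = {G \<in> L a. f \<in> p ` G}"
    unfolding etale_res_def by blast
  then show ?thesis using L_rs[OF a f] by simp
qed

end

section \<open>Transport of structure along bijections\<close>

locale order_bij =
  fixes f :: "'a \<Rightarrow> 'c" and A :: "'a set" and A' :: "'c set"
    and R :: "'a \<Rightarrow> 'a \<Rightarrow> bool" and R' :: "'c \<Rightarrow> 'c \<Rightarrow> bool"
  assumes bij: "bij_betw f A A'"
    and ord: "\<And>a b. a \<in> A \<Longrightarrow> b \<in> A \<Longrightarrow> R' (f a) (f b) \<longleftrightarrow> R a b"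
begin

lemma f_in: "a \<in> A \<Longrightarrow> f a \<in> A'"
  using bij bij_betwE by blast

lemma obtain_preimage: "y \<in> A' \<Longrightarrow> \<exists>x\<in>A. y = f x"
  using bij unfolding bij_betw_def by blast

lemma ball_iff: "(\<forall>y\<in>A'. P y) \<longleftrightarrow> (\<forall>x\<in>A. P (f x))"
  and bex_iff: "(\<exists>y\<in>A'. P y) \<longleftrightarrow> (\<exists>x\<in>A. P (f x))"
  using obtain_preimage f_in by metis+

lemma is_least_iff: "a \<in> A \<Longrightarrow> is_least A' R' (f a) \<longleftrightarrow> is_least A R a"
  unfolding is_least_def ball_iff[of "\<lambda>y. R' (f a) y"] using ord f_in by auto

lemma is_inf_iff: "a \<in> A \<Longrightarrow> b \<in> A \<Longrightarrow> m \<in> A \<Longrightarrow> is_inf A' R' (f a) (f b) (f m) \<longleftrightarrow> is_inf A R a b m"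
  unfolding is_inf_def ball_iff[of "\<lambda>c. R' c (f a) \<and> R' c (f b) \<longrightarrow> R' c (f m)"] using ord f_in by auto

lemma is_sup_iff: "a \<in> A \<Longrightarrow> b \<in> A \<Longrightarrow> m \<in> A \<Longrightarrow> is_sup A' R' (f a) (f b) (f m) \<longleftrightarrow> is_sup A R a b m"
  unfolding is_sup_def ball_iff[of "\<lambda>c. R' (f a) c \<and> R' (f b) c \<longrightarrow> R' (f m) c"] using ord f_in by auto

lemma is_least_in: "is_least A R z \<Longrightarrow> z \<in> A"
  and is_inf_in: "is_inf A R x y m \<Longrightarrow> m \<in> A"
  and is_sup_in: "is_sup A R x y m \<Longrightarrow> m \<in> A"
  unfolding is_least_def is_inf_def is_sup_def by blast+

lemma partial_order_transfer:
  assumes "partial_order_carrier A R" shows "partial_order_carrier A' R'"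
proof -
  have refl: "\<forall>x\<in>A. R x x" and antisym: "\<forall>x\<in>A. \<forall>y\<in>A. R x y \<and> R y x \<longrightarrow> x = y"
    and trans: "\<forall>x\<in>A. \<forall>y\<in>A. \<forall>z\<in>A. R x y \<and> R y z \<longrightarrow> R x z"
    using assms unfolding partial_order_carrier_def by blast+
  have "\<forall>x\<in>A. R' (f x) (f x)" using refl ord by simp
  moreover have "\<forall>x\<in>A. \<forall>y\<in>A. R' (f x) (f y) \<and> R' (f y) (f x) \<longrightarrow> f x = f y"
    using antisym ord by metis
  moreover have "\<forall>x\<in>A. \<forall>y\<in>A. \<forall>z\<in>A. R' (f x) (f y) \<and> R' (f y) (f z) \<longrightarrow> R' (f x) (f z)"
  proof (intro ballI impI)
    fix x y z assume "x \<in> A" "y \<in> A" "z \<in> A" "R' (f x) (f y) \<and> R' (f y) (f z)"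
    then show "R' (f x) (f z)" using trans ord by meson
  qed
  ultimately show ?thesis unfolding partial_order_carrier_def ball_iff by blast
qed

lemma distrib_axiom_transfer:
  assumes distrib: "\<forall>a\<in>A. \<forall>b\<in>A. \<forall>c\<in>A. \<forall>s m mb mc.
        is_sup A R b c s \<and> is_inf A R a s m \<and> is_inf A R a b mb \<and> is_inf A R a c mc
        \<longrightarrow> is_sup A R mb mc m"
  shows "\<forall>a\<in>A'. \<forall>b\<in>A'. \<forall>c\<in>A'. \<forall>s m mb mc.
        is_sup A' R' b c s \<and> is_inf A' R' a s m \<and> is_inf A' R' a b mb \<and> is_inf A' R' a c mc
        \<longrightarrow> is_sup A' R' mb mc m"
  unfolding ball_iff
proof (intro ballI allI impI)
  fix a b c s m mb mc assume abc: "a \<in> A" "b \<in> A" "c \<in> A"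
    and H: "is_sup A' R' (f b) (f c) s \<and> is_inf A' R' (f a) s m \<and> is_inf A' R' (f a) (f b) mb
      \<and> is_inf A' R' (f a) (f c) mc"
  have "s \<in> A'" "m \<in> A'" "mb \<in> A'" "mc \<in> A'"
    using H unfolding is_sup_def is_inf_def by blast+
  then obtain s0 m0 mb0 mc0 where s0: "s0 \<in> A" "s = f s0" and m0: "m0 \<in> A" "m = f m0"
    and mb0: "mb0 \<in> A" "mb = f mb0" and mc0: "mc0 \<in> A" "mc = f mc0"
    using obtain_preimage by meson
  have "is_sup A R b c s0" "is_inf A R a s0 m0" "is_inf A R a b mb0" "is_inf A R a c mc0"
    using H s0 m0 mb0 mc0 abc is_sup_iff is_inf_iff by auto
  then have "is_sup A R mb0 mc0 m0" using distrib abc by blast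
  then show "is_sup A' R' mb mc m" using is_sup_iff mb0 mc0 m0 by simp
qed

lemma complement_axiom_transfer:
  assumes compl: "\<forall>a\<in>A. \<forall>b\<in>A. \<forall>z. R a b \<and> is_least A R z \<longrightarrow>
        (\<exists>c\<in>A. is_inf A R a c z \<and> is_sup A R a c b)"
  shows "\<forall>a\<in>A'. \<forall>b\<in>A'. \<forall>z. R' a b \<and> is_least A' R' z \<longrightarrow>
        (\<exists>c\<in>A'. is_inf A' R' a c z \<and> is_sup A' R' a c b)"
  unfolding ball_iff
proof (intro ballI allI impI)
  fix a b z assume ab: "a \<in> A" "b \<in> A" and H: "R' (f a) (f b) \<and> is_least A' R' z"
  have "z \<in> A'" using H unfolding is_least_def by blast
  then obtain z0 where z0: "z0 \<in> A" "z = f z0" using obtain_preimage by blast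
  have "R a b" "is_least A R z0" using H ab z0 ord is_least_iff by auto
  then obtain c where c: "c \<in> A" "is_inf A R a c z0" "is_sup A R a c b" using compl ab by blast
  then have "is_inf A' R' (f a) (f c) z" "is_sup A' R' (f a) (f c) (f b)"
    using ab z0 is_inf_iff is_sup_iff by auto
  then show "\<exists>c\<in>A'. is_inf A' R' (f a) c z \<and> is_sup A' R' (f a) c (f b)" using c f_in by blast
qed

lemma gen_boolean_algebra_transfer:
  assumes "gen_boolean_algebra A R" shows "gen_boolean_algebra A' R'"
proof -
  have po: "partial_order_carrier A R" and least: "\<exists>z. is_least A R z"
    and inf_sup: "\<forall>a\<in>A. \<forall>b\<in>A. (\<exists>m. is_inf A R a b m) \<and> (\<exists>s. is_sup A R a b s)"
    and distrib: "\<forall>a\<in>A. \<forall>b\<in>A. \<forall>c\<in>A. \<forall>s m mb mc.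
        is_sup A R b c s \<and> is_inf A R a s m \<and> is_inf A R a b mb \<and> is_inf A R a c mc
        \<longrightarrow> is_sup A R mb mc m"
    and compl: "\<forall>a\<in>A. \<forall>b\<in>A. \<forall>z. R a b \<and> is_least A R z \<longrightarrow>
        (\<exists>c\<in>A. is_inf A R a c z \<and> is_sup A R a c b)"
    using assms unfolding gen_boolean_algebra_def by blast+
  have "\<exists>z. is_least A' R' z" using least is_least_iff[OF is_least_in] by blast
  moreover have "\<forall>a\<in>A'. \<forall>b\<in>A'. (\<exists>m. is_inf A' R' a b m) \<and> (\<exists>s. is_sup A' R' a b s)"
    unfolding ball_iff
  proof (intro ballI conjI)
    fix a b assume ab: "a \<in> A" "b \<in> A"
    then obtain m s where ms: "is_inf A R a b m" "is_sup A R a b s" using inf_sup by blast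
    show "\<exists>m. is_inf A' R' (f a) (f b) m" using is_inf_iff[OF ab is_inf_in[OF ms(1)]] ms(1) by blast
    show "\<exists>s. is_sup A' R' (f a) (f b) s" using is_sup_iff[OF ab is_sup_in[OF ms(2)]] ms(2) by blast
  qed
  ultimately show ?thesis unfolding gen_boolean_algebra_def
    using partial_order_transfer[OF po] distrib_axiom_transfer[OF distrib]
      complement_axiom_transfer[OF compl] by blast
qed

lemma ba_hom: "ba_hom A R A' R' f"
  unfolding ba_hom_def
proof (intro conjI allI impI ballI)
  show "f ` A \<subseteq> A'" using f_in by blast
  show "is_least A' R' (f z)" if "is_least A R z" for z using that is_least_iff is_least_in by blast
  show "is_inf A' R' (f a) (f b) (f m)" if "a \<in> A" "b \<in> A" "is_inf A R a b m" for a b m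
    using that is_inf_iff is_inf_in by blast
  show "is_sup A' R' (f a) (f b) (f m)" if "a \<in> A" "b \<in> A" "is_sup A R a b m" for a b m
    using that is_sup_iff is_sup_in by blast
qed

end

locale bool_set_bij =
  fixes X :: "'x set" and B :: "'b set" and le :: "'b \<Rightarrow> 'b \<Rightarrow> bool"
    and p :: "'x \<Rightarrow> 'b" and res :: "'b \<Rightarrow> 'b \<Rightarrow> 'x \<Rightarrow> 'x"
    and Y :: "'y set" and C :: "'c set" and le' :: "'c \<Rightarrow> 'c \<Rightarrow> bool"
    and q :: "'y \<Rightarrow> 'c" and res' :: "'c \<Rightarrow> 'c \<Rightarrow> 'y \<Rightarrow> 'y"
    and \<phi> :: "'x \<Rightarrow> 'y" and \<phi>b :: "'b \<Rightarrow> 'c"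
  assumes bij_X: "bij_betw \<phi> X Y" and bij_B: "bij_betw \<phi>b B C"
    and ord: "\<And>a b. a \<in> B \<Longrightarrow> b \<in> B \<Longrightarrow> le' (\<phi>b a) (\<phi>b b) \<longleftrightarrow> le a b"
    and p_in: "\<And>x. x \<in> X \<Longrightarrow> p x \<in> B"
    and proj: "\<And>x. x \<in> X \<Longrightarrow> q (\<phi> x) = \<phi>b (p x)"
    and phi_res: "\<And>x f. x \<in> X \<Longrightarrow> f \<in> B \<Longrightarrow> le f (p x) \<Longrightarrow> res' (\<phi>b (p x)) (\<phi>b f) (\<phi> x) = \<phi> (res (p x) f x)"
    and res_in: "\<And>x f. x \<in> X \<Longrightarrow> f \<in> B \<Longrightarrow> le f (p x) \<Longrightarrow> res (p x) f x \<in> X"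
begin

sublocale base: order_bij \<phi>b B C le le'
  by unfold_locales (rule bij_B, rule ord)

lemma bs_le_iff: assumes x: "x \<in> X" and y: "y \<in> X"
  shows "bs_le C le' q res' (\<phi> x) (\<phi> y) \<longleftrightarrow> bs_le B le p res x y"
proof (cases "le (p x) (p y)")
  case True
  have "res' (q (\<phi> y)) (q (\<phi> x)) (\<phi> y) = \<phi> (res (p y) (p x) y)"
    using proj x y phi_res[OF y p_in[OF x] True] by simp
  moreover have "le' (q (\<phi> x)) (q (\<phi> y))" using True proj x y ord p_in by simp
  moreover have "\<phi> x = \<phi> (res (p y) (p x) y) \<longleftrightarrow> x = res (p y) (p x) y"
    using bij_X res_in[OF y p_in[OF x] True] x unfolding bij_betw_def inj_on_def by auto
  ultimately show ?thesis unfolding bs_le_def using True by simp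
next
  case False
  then have "\<not> le' (q (\<phi> x)) (q (\<phi> y))" using proj x y ord p_in by simp
  then show ?thesis unfolding bs_le_def using False by simp
qed

sublocale elem: order_bij \<phi> X Y "bs_le B le p res" "bs_le C le' q res'"
  by unfold_locales (rule bij_X, rule bs_le_iff)

lemma morphism: "bs_morphism X B le p res Y C le' q res' \<phi> \<phi>b"
  unfolding bs_morphism_def using elem.f_in base.ba_hom proj phi_res by auto

lemma restriction_axiom_transfer:
  assumes "\<forall>x\<in>X. \<forall>f\<in>B. le f (p x) \<longrightarrow> res (p x) f x \<in> X \<and> p (res (p x) f x) = f"
  shows "\<forall>y\<in>Y. \<forall>f\<in>C. le' f (q y) \<longrightarrow> res' (q y) f y \<in> Y \<and> q (res' (q y) f y) = f"
  unfolding elem.ball_iff base.ball_iff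
proof (intro ballI impI)
  fix x f assume xf: "x \<in> X" "f \<in> B" "le' (\<phi>b f) (q (\<phi> x))"
  then have le: "le f (p x)" using proj ord p_in by simp
  have "res' (q (\<phi> x)) (\<phi>b f) (\<phi> x) = \<phi> (res (p x) f x)" using phi_res[OF xf(1,2) le] proj xf by simp
  then show "res' (q (\<phi> x)) (\<phi>b f) (\<phi> x) \<in> Y \<and> q (res' (q (\<phi> x)) (\<phi>b f) (\<phi> x)) = \<phi>b f"
    using assms xf le elem.f_in proj by simp
qed

lemma restriction_comp_transfer:
  assumes "\<forall>x\<in>X. \<forall>f\<in>B. \<forall>g\<in>B. le g f \<and> le f (p x) \<longrightarrow> res f g (res (p x) f x) = res (p x) g x"
    and "\<forall>x\<in>X. \<forall>f\<in>B. le f (p x) \<longrightarrow> res (p x) f x \<in> X \<and> p (res (p x) f x) = f"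
    and "partial_order_carrier B le"
  shows "\<forall>y\<in>Y. \<forall>f\<in>C. \<forall>g\<in>C. le' g f \<and> le' f (q y) \<longrightarrow> res' f g (res' (q y) f y) = res' (q y) g y"
  unfolding elem.ball_iff base.ball_iff
proof (intro ballI impI)
  fix x f g assume xfg: "x \<in> X" "f \<in> B" "g \<in> B" "le' (\<phi>b g) (\<phi>b f) \<and> le' (\<phi>b f) (q (\<phi> x))"
  then have le: "le g f" "le f (p x)" using proj ord p_in by auto
  define x1 where "x1 = res (p x) f x"
  have x1: "x1 \<in> X" "p x1 = f" using assms(2) xfg le unfolding x1_def by auto
  have lex: "le g (p x)" using assms(3) le xfg p_in unfolding partial_order_carrier_def by blast
  have "res' (q (\<phi> x)) (\<phi>b f) (\<phi> x) = \<phi> x1" using phi_res[OF xfg(1,2) le(2)] proj xfg unfolding x1_def by simp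
  then have "res' (\<phi>b f) (\<phi>b g) (res' (q (\<phi> x)) (\<phi>b f) (\<phi> x)) = \<phi> (res (p x1) g x1)"
    using phi_res[OF x1(1) xfg(3)] x1 le by simp
  also have "\<dots> = \<phi> (res (p x) g x)" using assms(1) xfg le x1 unfolding x1_def by simp
  also have "\<dots> = res' (q (\<phi> x)) (\<phi>b g) (\<phi> x)" using phi_res[OF xfg(1,3) lex] proj xfg by simp
  finally show "res' (\<phi>b f) (\<phi>b g) (res' (q (\<phi> x)) (\<phi>b f) (\<phi> x)) = res' (q (\<phi> x)) (\<phi>b g) (\<phi> x)" .
qed

lemma bottom_axiom_transfer:
  assumes "\<exists>z. is_least X (bs_le B le p res) z \<and> (\<forall>x\<in>X. is_least B le (p x) \<longrightarrow> x = z)"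
  shows "\<exists>z. is_least Y (bs_le C le' q res') z \<and> (\<forall>y\<in>Y. is_least C le' (q y) \<longrightarrow> y = z)"
proof -
  obtain z where z: "is_least X (bs_le B le p res) z" "\<forall>x\<in>X. is_least B le (p x) \<longrightarrow> x = z"
    using assms by blast
  have zX: "z \<in> X" using elem.is_least_in[OF z(1)] .
  have "is_least Y (bs_le C le' q res') (\<phi> z)" using elem.is_least_iff[OF zX] z(1) by blast
  moreover have "\<forall>y\<in>Y. is_least C le' (q y) \<longrightarrow> y = \<phi> z" unfolding elem.ball_iff
  proof (intro ballI impI)
    fix x assume "x \<in> X" "is_least C le' (q (\<phi> x))"
    then have "is_least B le (p x)" using proj base.is_least_iff p_in by simp
    then show "\<phi> x = \<phi> z" using z \<open>x \<in> X\<close> by simp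
  qed
  ultimately show ?thesis by blast
qed

lemma compatible_sup_axiom_transfer:
  assumes "\<forall>x\<in>X. \<forall>y\<in>X. (\<exists>m. is_inf X (bs_le B le p res) x y m \<and> is_inf B le (p x) (p y) (p m))
        \<longrightarrow> (\<exists>s. is_sup X (bs_le B le p res) x y s)"
  shows "\<forall>y1\<in>Y. \<forall>y2\<in>Y. (\<exists>m. is_inf Y (bs_le C le' q res') y1 y2 m \<and> is_inf C le' (q y1) (q y2) (q m))
        \<longrightarrow> (\<exists>s. is_sup Y (bs_le C le' q res') y1 y2 s)"
  unfolding elem.ball_iff
proof (intro ballI impI)
  fix x1 x2 assume x: "x1 \<in> X" "x2 \<in> X"
    and "\<exists>m. is_inf Y (bs_le C le' q res') (\<phi> x1) (\<phi> x2) m \<and> is_inf C le' (q (\<phi> x1)) (q (\<phi> x2)) (q m)"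
  then obtain m' where m': "is_inf Y (bs_le C le' q res') (\<phi> x1) (\<phi> x2) m'"
    "is_inf C le' (q (\<phi> x1)) (q (\<phi> x2)) (q m')" by blast
  have "m' \<in> Y" using m'(1) unfolding is_inf_def by blast
  then obtain m where m: "m \<in> X" "m' = \<phi> m" using elem.obtain_preimage by blast
  have "is_inf X (bs_le B le p res) x1 x2 m" using elem.is_inf_iff x m m' by simp
  moreover have "is_inf B le (p x1) (p x2) (p m)" using base.is_inf_iff x m m' proj p_in by simp
  ultimately obtain s where s: "is_sup X (bs_le B le p res) x1 x2 s" using assms x by blast
  then have "is_sup Y (bs_le C le' q res') (\<phi> x1) (\<phi> x2) (\<phi> s)"
    using elem.is_sup_iff x elem.is_sup_in[OF s] by blast
  then show "\<exists>s. is_sup Y (bs_le C le' q res') (\<phi> x1) (\<phi> x2) s" by blast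
qed

lemma boolean_set_transfer:
  assumes "boolean_set X B le p res" shows "boolean_set Y C le' q res'"
proof -
  have ba: "gen_boolean_algebra B le"
    and surj: "\<forall>e\<in>B. \<exists>x\<in>X. p x = e"
    and restr: "\<forall>x\<in>X. \<forall>f\<in>B. le f (p x) \<longrightarrow> res (p x) f x \<in> X \<and> p (res (p x) f x) = f"
    and restr_id: "\<forall>x\<in>X. res (p x) (p x) x = x"
    and restr_comp: "\<forall>x\<in>X. \<forall>f\<in>B. \<forall>g\<in>B. le g f \<and> le f (p x) \<longrightarrow> res f g (res (p x) f x) = res (p x) g x"
    and bottom: "\<exists>z. is_least X (bs_le B le p res) z \<and> (\<forall>x\<in>X. is_least B le (p x) \<longrightarrow> x = z)"
    and sups: "\<forall>x\<in>X. \<forall>y\<in>X. (\<exists>m. is_inf X (bs_le B le p res) x y m \<and> is_inf B le (p x) (p y) (p m))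
        \<longrightarrow> (\<exists>s. is_sup X (bs_le B le p res) x y s)"
    using assms unfolding boolean_set_def by blast+
  have po: "partial_order_carrier B le" using ba unfolding gen_boolean_algebra_def by blast
  have "\<forall>y\<in>Y. q y \<in> C" unfolding elem.ball_iff using proj p_in base.f_in by simp
  moreover have "\<forall>e\<in>C. \<exists>y\<in>Y. q y = e" unfolding base.ball_iff elem.bex_iff using surj proj by metis
  moreover have "\<forall>y\<in>Y. res' (q y) (q y) y = y" unfolding elem.ball_iff
    using phi_res p_in restr_id proj po unfolding partial_order_carrier_def by simp
  ultimately show ?thesis unfolding boolean_set_def
    using base.gen_boolean_algebra_transfer[OF ba] restriction_axiom_transfer[OF restr]
      restriction_comp_transfer[OF restr_comp restr po] bottom_axiom_transfer[OF bottom]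
      compatible_sup_axiom_transfer[OF sups] by blast
qed

end

context bool_set_bij
begin

lemma inverse_bij:
  assumes "boolean_set X B le p res"
  shows "bool_set_bij Y C le' q res' X B le p res (inv_into X \<phi>) (inv_into B \<phi>b)"
proof -
  have restr: "\<forall>x\<in>X. \<forall>f\<in>B. le f (p x) \<longrightarrow> res (p x) f x \<in> X \<and> p (res (p x) f x) = f"
    using assms unfolding boolean_set_def by blast
  have iX: "\<And>x. x \<in> X \<Longrightarrow> inv_into X \<phi> (\<phi> x) = x" using bij_X bij_betw_inv_into_left by metis
  have iB: "\<And>b. b \<in> B \<Longrightarrow> inv_into B \<phi>b (\<phi>b b) = b" using bij_B bij_betw_inv_into_left by metis
  have pre: "\<exists>x f0. x \<in> X \<and> y = \<phi> x \<and> f0 \<in> B \<and> f = \<phi>b f0 \<and> le f0 (p x)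
      \<and> res' (q y) f y = \<phi> (res (p x) f0 x)"
    if yf: "y \<in> Y" "f \<in> C" "le' f (q y)" for y f
  proof -
    obtain x where x: "x \<in> X" "y = \<phi> x" using elem.obtain_preimage yf by blast
    obtain f0 where f0: "f0 \<in> B" "f = \<phi>b f0" using base.obtain_preimage yf by blast
    have "le f0 (p x)" using yf x f0 proj ord p_in by simp
    then show ?thesis using phi_res[OF x(1) f0(1)] x f0 proj by auto
  qed
  show ?thesis
  proof unfold_locales
    show "bij_betw (inv_into X \<phi>) Y X" "bij_betw (inv_into B \<phi>b) C B"
      using bij_betw_inv_into bij_X bij_B by blast+
    show "le (inv_into B \<phi>b a) (inv_into B \<phi>b b) \<longleftrightarrow> le' a b" if "a \<in> C" "b \<in> C" for a b
      using that base.obtain_preimage iB ord by metis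
    show "q y \<in> C" if "y \<in> Y" for y using that elem.obtain_preimage proj p_in base.f_in by metis
    show "p (inv_into X \<phi> y) = inv_into B \<phi>b (q y)" if "y \<in> Y" for y
      using that elem.obtain_preimage proj p_in iX iB by metis
    show "res (inv_into B \<phi>b (q y)) (inv_into B \<phi>b f) (inv_into X \<phi> y) = inv_into X \<phi> (res' (q y) f y)"
      if "y \<in> Y" "f \<in> C" "le' f (q y)" for y f
      using pre[OF that] restr iX iB proj by (metis p_in)
    show "res' (q y) f y \<in> Y" if "y \<in> Y" "f \<in> C" "le' f (q y)" for y f
      using pre[OF that] res_in elem.f_in by metis
  qed
qed

lemma iso:
  assumes "boolean_set X B le p res"
  shows "boolean_set Y C le' q res' \<and> bs_iso X B le p res Y C le' q res' \<phi> \<phi>b"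
proof -
  interpret inv: bool_set_bij Y C le' q res' X B le p res "inv_into X \<phi>" "inv_into B \<phi>b"
    by (rule inverse_bij[OF assms])
  have "\<forall>x\<in>X. inv_into X \<phi> (\<phi> x) = x" "\<forall>y\<in>Y. \<phi> (inv_into X \<phi> y) = y"
    "\<forall>b\<in>B. inv_into B \<phi>b (\<phi>b b) = b" "\<forall>c\<in>C. \<phi>b (inv_into B \<phi>b c) = c"
    using bij_X bij_B bij_betw_inv_into_left bij_betw_inv_into_right by metis+
  then have "bs_iso X B le p res Y C le' q res' \<phi> \<phi>b"
    unfolding bs_iso_def using morphism inv.morphism by blast
  then show ?thesis using boolean_set_transfer[OF assms] by blast
qed

end

theorem proposition3p13:
  fixes X :: "'x set" and B :: "'b set" and le :: "'b \<Rightarrow> 'b \<Rightarrow> bool"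
    and p :: "'x \<Rightarrow> 'b" and res :: "'b \<Rightarrow> 'b \<Rightarrow> 'x \<Rightarrow> 'x"
  assumes "boolean_set X B le p res"
  shows "boolean_set
           (etale_sections (dual_X_top X B le p res) (\<lambda>G. p ` G))
           (compact_opens (dual_B_top B le)) (\<subseteq>)
           (etale_proj (\<lambda>G. p ` G)) (etale_res (dual_X_top X B le p res) (\<lambda>G. p ` G))
       \<and> bs_iso X B le p res
           (etale_sections (dual_X_top X B le p res) (\<lambda>G. p ` G))
           (compact_opens (dual_B_top B le)) (\<subseteq>)
           (etale_proj (\<lambda>G. p ` G)) (etale_res (dual_X_top X B le p res) (\<lambda>G. p ` G))
           (L_set X B le p res) (M_set B le)"
proof -
  interpret bool_set X B le p res by unfold_locales (rule assms)
  interpret double_dual: bool_set_bij X B le p res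
     "etale_sections TX (\<lambda>G. p ` G)" "compact_opens TB" "(\<subseteq>)"
     "etale_proj (\<lambda>G. p ` G)" "etale_res TX (\<lambda>G. p ` G)" L M
  proof unfold_locales
    show "bij_betw L X (etale_sections TX (\<lambda>G. p ` G))"
      unfolding etale_sections_dual bij_betw_def inj_on_def using L_inj by blast
    show "bij_betw M B (compact_opens TB)"
      unfolding compact_opens_dual bij_betw_def inj_on_def using M_inj by blast
    show "M a \<subseteq> M b \<longleftrightarrow> le a b" if "a \<in> B" "b \<in> B" for a b using M_subset_iff[OF that] .
    show "p x \<in> B" if "x \<in> X" for x using p_in[OF that] .
    show "etale_proj (\<lambda>G. p ` G) (L x) = M (p x)" if "x \<in> X" for x using etale_proj_L[OF that] .
    show "etale_res TX (\<lambda>G. p ` G) (M (p x)) (M f) (L x) = L (rs x f)"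
      and "rs x f \<in> X" if "x \<in> X" "f \<in> B" "le f (p x)" for x f
      using etale_res_L[OF that] rs_in[OF that] by simp_all
  qed
  show ?thesis by (rule double_dual.iso[OF assms])
qed

end
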